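(* Let $\Phi=[\phi_k : k\in\mathbb{Z}]$ be the semi-regular Dubuc–Deslauriers $2n$-point scaling functions (defined in the context). Then: (i) $\Phi$ is a Riesz basis for $\overline{\mathrm{span}(\Phi)}^{L^2}$, i.e. there exist $0<A\le B<\infty$ such that $A\|\mathbf{f}\|_{\ell^2}^2\le\|\Phi^T\mathbf{f}\|_{L^2}^2\le B\|\mathbf{f}\|_{\ell^2}^2$ for all $\mathbf{f}\in\ell^2(\mathbb{Z})$, where $\Phi^T\mathbf{f}=\sum_k\mathbf{f}(k)\phi_k$; (ii) $\Phi$ is uniformly bounded: $\sup_{k\in\mathbb{Z}}\|\phi_k\|_{L^\infty}<\infty$; (iii) $\Phi$ is strictly local: $\sup_{k\in\mathbb{Z}}|\mathrm{supp}(\phi_k)|<\infty$, and there exists $s\in\mathbb{N}$ such that for every index set $\mathcal{I}\subset\mathbb{Z}$ with $|\mathcal{I}|>s$ one has $\bigcap_{k\in\mathcal{I}}\mathrm{supp}(\phi_k)=\emptyset$; (iv) $\lim_{j\to\infty}\sup_{k\in\mathbb{Z}}|\mathrm{supp}\,\phi_k(2^j\cdot)|=0$.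
   Context: Fix $n\in\mathbb{N}$, $h_\ell,h_r>0$, and the mesh $\mathbf{t}(k)=kh_\ell$ for $k<0$, $\mathbf{t}(k)=kh_r$ for $k\ge0$. Let $\mathbf{P}$ be the bi-infinite matrix with $\mathbf{P}(2k,k)=1$; for each $k$, $\mathbf{P}(2k+1,j)$, $j=k-n+1,\dots,k+n$, the unique numbers with $\sum_{j=k-n+1}^{k+n}\mathbf{P}(2k+1,j)\mathbf{t}(j)^\alpha=(\mathbf{t}(2k+1)/2)^\alpha$, $\alpha=0,\dots,2n-1$; all other entries $0$ (semi-regular Dubuc–Deslauriers $2n$-point scheme). This scheme is convergent: for each $k\in\mathbb{Z}$ there is a continuous function $\varphi_k$ (basic limit function) which is the uniform limit as $j\to\infty$ of the piecewise linear interpolants of the data $(2^{-j}\mathbf{t}(m),(\mathbf{P}^j\delta_k)(m))_{m\in\mathbb{Z}}$, $\delta_k$ the unit sequence at $k$. Standing assumption: $h_\ell,h_r$ are such that $\int_{\mathbb{R}}\varphi_k(x)\,dx>0$ for all $k\in\mathbb{Z}$. Let $\mathbf{D}=\mathrm{diag}\big(\int_{\mathbb{R}}\varphi_k\big)_{k\in\mathbb{Z}}$ and define the scaling functions $\Phi=[\phi_k:k\in\mathbb{Z}]=\mathbf{D}^{-1/2}[\varphi_k:k\in\mathbb{Z}]$, i.e. $\phi_k=\varphi_k/\sqrt{\int_{\mathbb{R}}\varphi_k}$. *)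

theory Defs
  imports "HOL-Analysis.Analysis"
begin

definition mesh :: "real \<Rightarrow> real \<Rightarrow> int \<Rightarrow> real" where
  "mesh hl hr k = (if k < 0 then real_of_int k * hl else real_of_int k * hr)"

text \<open>Odd row 2k+1 of the subdivision matrix: the unique weights supported on
  {k-n+1..k+n} reproducing polynomials of degree < 2n at t(2k+1)/2.\<close>
definition DD_row :: "real \<Rightarrow> real \<Rightarrow> nat \<Rightarrow> int \<Rightarrow> (int \<Rightarrow> real)" where
  "DD_row hl hr n k = (THE w. (\<forall>j. j \<notin> {k - int n + 1 .. k + int n} \<longrightarrow> w j = 0) \<and>
      (\<forall>\<alpha><2*n. (\<Sum>j\<in>{k - int n + 1 .. k + int n}. w j * mesh hl hr j ^ \<alpha>)
                 = (mesh hl hr (2*k+1) / 2) ^ \<alpha>))"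

definition DD_mat :: "real \<Rightarrow> real \<Rightarrow> nat \<Rightarrow> int \<Rightarrow> int \<Rightarrow> real" where
  "DD_mat hl hr n m j =
     (if even m then (if j = m div 2 then 1 else 0) else DD_row hl hr n (m div 2) j)"

text \<open>Application of P to a bi-infinite sequence; row m has nonzero entries only
  for j in {m div 2 - n + 1 .. m div 2 + n}, so this is the matrix-vector product.\<close>
definition DD_apply :: "real \<Rightarrow> real \<Rightarrow> nat \<Rightarrow> (int \<Rightarrow> real) \<Rightarrow> (int \<Rightarrow> real)" where
  "DD_apply hl hr n v m = (\<Sum>j\<in>{m div 2 - int n + 1 .. m div 2 + int n}. DD_mat hl hr n m j * v j)"

definition unit_seq :: "int \<Rightarrow> int \<Rightarrow> real" where
  "unit_seq k m = (if m = k then 1 else 0)"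

text \<open>Piecewise linear interpolant of data (xs m, c m), xs strictly increasing and
  unbounded in both directions.\<close>
definition pwlin :: "(int \<Rightarrow> real) \<Rightarrow> (int \<Rightarrow> real) \<Rightarrow> real \<Rightarrow> real" where
  "pwlin xs c x = (let m = (THE m. xs m \<le> x \<and> x < xs (m+1)) in
      c m + (c (m+1) - c m) * (x - xs m) / (xs (m+1) - xs m))"

definition DD_level :: "real \<Rightarrow> real \<Rightarrow> nat \<Rightarrow> nat \<Rightarrow> (int \<Rightarrow> real) \<Rightarrow> real \<Rightarrow> real" where
  "DD_level hl hr n j v = pwlin (\<lambda>m. mesh hl hr m / 2 ^ j) ((DD_apply hl hr n ^^ j) v)"

definition fsupp :: "(real \<Rightarrow> real) \<Rightarrow> real set" where
  "fsupp f = closure {x. f x \<noteq> 0}"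

definition scaling_fun :: "(int \<Rightarrow> real \<Rightarrow> real) \<Rightarrow> int \<Rightarrow> real \<Rightarrow> real" where
  "scaling_fun \<phi> k x = \<phi> k x / sqrt (integral UNIV (\<phi> k))"

end

theory Submission
  imports Defs "HOL-Computational_Algebra.Polynomial"
begin

(* Away from the origin the mesh is uniform, so the moment conditions defining the rows of P are
   translation invariant there.  Consequently the iterates of P on unit sequences, and hence the
   limits phi_k, are translates of phi_(2n-1) for k >= 2n-1 and of phi_(-2n) for k <= -2n: up to
   translation only finitely many profiles occur.  This gives uniform bounds on the sup norm, the
   L2 norm, the integral and the modulus of continuity of the phi_k.

   Each phi_k vanishes outside [t(k-2n+1), t(k+2n-1)], so at most 4n-1 supports overlap; this gives
   the support statements and, by Cauchy-Schwarz, the upper Riesz bound.  For the lower bound, the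
   phi_k interpolate, phi_k(t m) = delta_km, so by equicontinuity the synthesis sum_k f(k) phi_k is
   close to f(m) / sqrt(int phi_m) on a small interval around each node t m; integrating over these
   disjoint intervals bounds the L2 norm of the synthesis from below. *)

section \<open>Moment systems\<close>

lemma vanishing_moments_imp_zero:
  fixes x :: "'a \<Rightarrow> real"
  assumes fin: "finite S" and inj: "inj_on x S" and N: "card S = N"
    and mom: "\<And>\<alpha>. \<alpha> < N \<Longrightarrow> (\<Sum>j\<in>S. d j * x j ^ \<alpha>) = 0"
    and j0: "j0 \<in> S"
  shows "d j0 = 0"
proof -
  \<comment> \<open>test the moments against the polynomial vanishing at all nodes except \<open>x j0\<close>\<close>
  define p where "p = (\<Prod>m\<in>S-{j0}. [:- x m, 1:])"
  have "degree p \<le> sum (degree \<circ> (\<lambda>m. [:- x m, 1:])) (S - {j0})"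
    unfolding p_def by (rule degree_prod_sum_le) (use fin in auto)
  also have "\<dots> = card (S - {j0})" by simp
  also have "\<dots> < N" using N j0 fin by (metis card_Diff1_less)
  finally have deg: "degree p < N" .
  have "(\<Sum>j\<in>S. d j * poly p (x j)) = (\<Sum>j\<in>S. \<Sum>i\<le>degree p. d j * (coeff p i * x j ^ i))"
    by (simp add: poly_altdef sum_distrib_left)
  also have "\<dots> = (\<Sum>i\<le>degree p. coeff p i * (\<Sum>j\<in>S. d j * x j ^ i))"
    by (subst sum.swap) (simp add: sum_distrib_left mult_ac)
  also have "\<dots> = 0" using mom deg by simp
  finally have s0: "(\<Sum>j\<in>S. d j * poly p (x j)) = 0" .
  have pj: "poly p (x j) = (\<Prod>m\<in>S-{j0}. x j - x m)" for j
    unfolding p_def by (simp add: poly_prod)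
  have "poly p (x j) = 0" if "j \<in> S" "j \<noteq> j0" for j
    unfolding pj using fin that by (auto intro: prod_zero)
  then have "(\<Sum>j\<in>S. d j * poly p (x j)) = d j0 * poly p (x j0)"
    by (intro sum.remove[OF fin j0, THEN trans]) simp
  moreover have "poly p (x j0) \<noteq> 0"
    unfolding pj using fin inj j0 by (auto simp: prod_zero_iff inj_on_def)
  ultimately show ?thesis using s0 by simp
qed

lemma moment_weights_unique:
  fixes x :: "'a \<Rightarrow> real"
  assumes fin: "finite S" and inj: "inj_on x S" and N: "card S = N"
    and zero: "\<And>j. j \<notin> S \<Longrightarrow> w j = 0" "\<And>j. j \<notin> S \<Longrightarrow> w' j = 0"
    and mom: "\<And>\<alpha>. \<alpha> < N \<Longrightarrow> (\<Sum>j\<in>S. w j * x j ^ \<alpha>) = (\<Sum>j\<in>S. w' j * x j ^ \<alpha>)"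
  shows "w = w'"
proof
  fix j
  show "w j = w' j"
  proof (cases "j \<in> S")
    case True
    have "(\<lambda>j. w j - w' j) j = 0"
      by (rule vanishing_moments_imp_zero[OF fin inj N _ True])
         (simp add: mom left_diff_distrib sum_subtractf)
    then show ?thesis by simp
  qed (simp add: zero)
qed

lemma lagrange_basis_exists:
  fixes x :: "'a \<Rightarrow> real"
  assumes fin: "finite S" and inj: "inj_on x S" and N: "card S = N" and j: "j \<in> S"
  shows "\<exists>L. degree L \<le> N - 1 \<and> (\<forall>i\<in>S. poly L (x i) = (if i = j then 1 else 0))"
proof (intro exI conjI ballI)
  define L where "L = smult (1 / (\<Prod>m\<in>S-{j}. x j - x m)) (\<Prod>m\<in>S-{j}. [:- x m, 1:])"
  have "degree L \<le> sum (degree \<circ> (\<lambda>m. [:- x m, 1:])) (S - {j})"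
    unfolding L_def by (rule order_trans[OF degree_smult_le degree_prod_sum_le]) (use fin in auto)
  also have "\<dots> = N - 1" using N j fin by simp
  finally show "degree L \<le> N - 1" .
  fix i assume i: "i \<in> S"
  have "(\<Prod>m\<in>S-{j}. x j - x m) \<noteq> 0" using fin inj j by (auto simp: prod_zero_iff inj_on_def)
  moreover have "(\<Prod>m\<in>S-{j}. x i - x m) = 0" if "i \<noteq> j" using fin i that by (intro prod_zero) auto
  ultimately show "poly L (x i) = (if i = j then 1 else 0)"
    unfolding L_def by (simp add: poly_prod)
qed

lemma moment_weights_exist:
  fixes x :: "'a \<Rightarrow> real"
  assumes fin: "finite S" and inj: "inj_on x S" and N: "card S = N"
  shows "\<exists>w. (\<forall>j. j \<notin> S \<longrightarrow> w j = 0) \<and> (\<forall>\<alpha><N. (\<Sum>j\<in>S. w j * x j ^ \<alpha>) = y ^ \<alpha>)"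
proof -
  obtain L where degL: "\<And>j. j \<in> S \<Longrightarrow> degree (L j) \<le> N - 1"
    and L: "\<And>i j. i \<in> S \<Longrightarrow> j \<in> S \<Longrightarrow> poly (L j) (x i) = (if i = j then 1 else 0)"
    using lagrange_basis_exists[OF fin inj N] by metis
  define w where "w j = (if j \<in> S then poly (L j) y else 0)" for j
  have "(\<Sum>j\<in>S. w j * x j ^ \<alpha>) = y ^ \<alpha>" if "\<alpha> < N" for \<alpha>
  proof -
    \<comment> \<open>Lagrange interpolation reproduces the monomial of degree \<open>\<alpha> < N\<close>\<close>
    define Q where "Q = (\<Sum>j\<in>S. smult (x j ^ \<alpha>) (L j))"
    have cS: "card (x ` S) = N" using card_image[OF inj] N by simp
    have "Q = monom 1 \<alpha>"
    proof (rule poly_eqI_degree[where A = "x ` S"])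
      fix z assume "z \<in> x ` S"
      then obtain i where i: "i \<in> S" "z = x i" by auto
      have "poly Q z = (\<Sum>j\<in>S. if j = i then x j ^ \<alpha> else 0)"
        unfolding Q_def i poly_sum by (rule sum.cong) (auto simp: L i)
      then show "poly Q z = poly (monom 1 \<alpha>) z" using i fin by (simp add: poly_monom)
    next
      have "degree Q \<le> N - 1" unfolding Q_def
        by (rule degree_sum_le[OF fin]) (meson degL degree_smult_le order_trans)
      then show "degree Q < card (x ` S)" using cS that by linarith
      show "degree (monom (1::real) \<alpha>) < card (x ` S)"
        using cS that degree_monom_le by (metis le_less_trans)
    qed
    then have "poly Q y = y ^ \<alpha>" by (simp add: poly_monom)
    moreover have "poly Q y = (\<Sum>j\<in>S. w j * x j ^ \<alpha>)"
      unfolding Q_def w_def by (auto simp: poly_sum mult_ac intro: sum.cong)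
    ultimately show ?thesis by simp
  qed
  then show ?thesis by (intro exI[of _ w]) (auto simp: w_def)
qed

lemma moment_weights_translate:
  fixes x :: "'a \<Rightarrow> real"
  assumes fin: "finite S" and mom: "\<And>\<alpha>. \<alpha> < N \<Longrightarrow> (\<Sum>j\<in>S. w j * x j ^ \<alpha>) = y ^ \<alpha>"
    and a: "\<alpha> < N"
  shows "(\<Sum>j\<in>S. w j * (x j + d) ^ \<alpha>) = (y + d) ^ \<alpha>"
proof -
  have "(\<Sum>j\<in>S. w j * (x j + d) ^ \<alpha>) =
        (\<Sum>j\<in>S. \<Sum>b\<le>\<alpha>. of_nat (\<alpha> choose b) * d ^ (\<alpha> - b) * (w j * x j ^ b))"
    by (simp add: binomial_ring sum_distrib_left mult_ac)
  also have "\<dots> = (\<Sum>b\<le>\<alpha>. of_nat (\<alpha> choose b) * d ^ (\<alpha> - b) * (\<Sum>j\<in>S. w j * x j ^ b))"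
    by (subst sum.swap) (simp add: sum_distrib_left)
  also have "\<dots> = (\<Sum>b\<le>\<alpha>. of_nat (\<alpha> choose b) * y ^ b * d ^ (\<alpha> - b))"
    using a mom by (intro sum.cong) auto
  also have "\<dots> = (y + d) ^ \<alpha>" by (simp add: binomial_ring)
  finally show ?thesis .
qed

lemma sum_int_interval_shift: "(\<Sum>l\<in>{a..b::int}. f l) = (\<Sum>l\<in>{a-c..b-c}. f (l + c))"
  by (rule sum.reindex_bij_witness[of _ "\<lambda>l. l + c" "\<lambda>l. l - c"]) auto

lemma int_even_odd_cases:
  fixes i :: int
  obtains k where "i = 2*k" | k where "i = 2*k+1"
proof -
  have "i = 2*(i div 2) \<or> i = 2*(i div 2)+1" by presburger
  then show ?thesis using that by blast
qed

lemma integrable_vanishing_outside_Icc: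
  fixes f :: "real \<Rightarrow> real"
  assumes "continuous_on UNIV f" "\<And>x. x \<notin> {a..b} \<Longrightarrow> f x = 0"
  shows "f integrable_on UNIV"
  by (rule integrable_on_superset[OF integrable_continuous_interval])
     (use assms in \<open>auto intro: continuous_on_subset\<close>)

lemma integral_vanishing_outside_Icc:
  fixes f :: "real \<Rightarrow> real"
  assumes "\<And>x. x \<notin> {a..b} \<Longrightarrow> f x = 0"
  shows "integral UNIV f = integral {a..b} f"
proof -
  have "(\<lambda>x. if x \<in> {a..b} then f x else 0) = f" using assms by auto
  then show ?thesis using integral_restrict_UNIV[of "{a..b}" f] by simp
qed

lemma integral_translate_vanishing_outside_Icc:
  fixes f :: "real \<Rightarrow> real"
  assumes z: "\<And>x. x \<notin> {a..b} \<Longrightarrow> f x = 0"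
  shows "integral UNIV (\<lambda>x. f (x - s)) = integral UNIV f"
proof -
  have "integral UNIV (\<lambda>x. f (x - s)) = integral {a+s..b+s} (\<lambda>x. f (x - s))"
    by (rule integral_vanishing_outside_Icc) (use z in auto)
  also have "\<dots> = integral {a+s..b+s} (f \<circ> (+) (-s))" by (simp add: o_def)
  also have "\<dots> = integral {a..b} f" by (subst integral_shift_Icc_real) simp
  also have "\<dots> = integral UNIV f" by (rule integral_vanishing_outside_Icc[symmetric]) (use z in auto)
  finally show ?thesis .
qed

lemma bounded_vanishing_outside_Icc:
  fixes f :: "real \<Rightarrow> real"
  assumes "continuous_on UNIV f" "\<And>x. x \<notin> {a..b} \<Longrightarrow> f x = 0"
  shows "\<exists>M. \<forall>x. \<bar>f x\<bar> \<le> M"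
proof -
  have "bounded (f ` {a..b})"
    using assms(1) by (intro compact_imp_bounded compact_continuous_image) (auto intro: continuous_on_subset)
  then obtain M where "\<forall>x\<in>{a..b}. \<bar>f x\<bar> \<le> M" unfolding bounded_iff by auto
  then have "\<bar>f x\<bar> \<le> max M 0" for x using assms(2)[of x] by (cases "x \<in> {a..b}") force+
  then show ?thesis by blast
qed

lemma uniformly_continuous_vanishing_outside_Icc:
  fixes f :: "real \<Rightarrow> real"
  assumes "continuous_on UNIV f" "\<And>x. x \<notin> {a..b} \<Longrightarrow> f x = 0"
  shows "uniformly_continuous_on UNIV f"
  unfolding uniformly_continuous_on_def
proof (intro allI impI)
  fix e :: real assume e: "e > 0"
  have "uniformly_continuous_on {a-1..b+1} f"
    using assms(1) by (intro compact_uniformly_continuous) (auto intro: continuous_on_subset)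
  then obtain d where d: "d > 0"
    "\<And>x y. x \<in> {a-1..b+1} \<Longrightarrow> y \<in> {a-1..b+1} \<Longrightarrow> dist y x < d \<Longrightarrow> dist (f y) (f x) < e"
    unfolding uniformly_continuous_on_def using e by metis
  \<comment> \<open>points at distance < 1 are either both in the enlarged interval or both outside {a..b}\<close>
  have "dist (f y) (f x) < e" if "dist y x < min d 1" for x y
  proof (cases "x \<in> {a-1..b+1} \<and> y \<in> {a-1..b+1}")
    case False
    then have "x \<notin> {a..b}" "y \<notin> {a..b}" using that by (auto simp: dist_real_def)
    then show ?thesis using assms(2) e by simp
  qed (use d that in auto)
  then show "\<exists>d>0. \<forall>x\<in>UNIV. \<forall>y\<in>UNIV. dist y x < d \<longrightarrow> dist (f y) (f x) < e"
    using d(1) by (intro exI[of _ "min d 1"]) auto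
qed

lemma integrable_le_if_bounded_on_exhaustion:
  fixes g :: "real \<Rightarrow> real" and B :: "nat \<Rightarrow> real set"
  assumes "incseq B" "(\<Union>N. B N) = UNIV" "\<And>x. g x \<ge> 0"
    and "\<And>N. g integrable_on B N" "\<And>N. integral (B N) g \<le> C"
  shows "g integrable_on UNIV \<and> integral UNIV g \<le> C"
proof -
  define h where "h N x = (if x \<in> B N then g x else 0)" for N x
  have h_int: "h N integrable_on UNIV" for N
    unfolding h_def using assms(4) integrable_restrict_UNIV by blast
  have h_integral: "integral UNIV (h N) = integral (B N) g" for N
    unfolding h_def by (rule integral_restrict_UNIV)
  have h_mono: "h N x \<le> h (Suc N) x" for N x
    using assms(1,3) unfolding h_def incseq_Suc_iff by auto
  have h_lim: "(\<lambda>N. h N x) \<longlonglongrightarrow> g x" for x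
  proof (rule tendsto_eventually)
    obtain N0 where "x \<in> B N0" using assms(2) by blast
    then have "x \<in> B N" if "N \<ge> N0" for N using assms(1) that by (auto simp: incseq_def)
    then show "\<forall>\<^sub>F N in sequentially. h N x = g x"
      unfolding h_def by (intro eventually_sequentiallyI[of N0]) auto
  qed
  have "integral (B N) g \<ge> 0" for N using assms(3,4) by (intro integral_nonneg) auto
  then have "bounded (range (\<lambda>N. integral UNIV (h N)))"
    unfolding bounded_iff h_integral using assms(5) by (intro exI[of _ C]) auto
  from monotone_convergence_increasing[OF h_int h_mono h_lim this]
  have "g integrable_on UNIV" "(\<lambda>N. integral (B N) g) \<longlonglongrightarrow> integral UNIV g"
    unfolding h_integral by auto
  then show ?thesis using assms(5) by (auto intro: tendsto_upperbound[of _ _ sequentially])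
qed

lemma finite_common_delta:
  assumes "finite A" "\<And>a. a \<in> A \<Longrightarrow> \<exists>d>0. \<forall>x y. \<bar>x - y\<bar> < d \<longrightarrow> Q a x y"
  shows "\<exists>d>0. \<forall>a\<in>A. \<forall>x y. \<bar>x - y\<bar> < (d::real) \<longrightarrow> Q a x y"
  using assms
proof (induction A rule: finite_induct)
  case empty then show ?case by (intro exI[of _ 1]) auto
next
  case (insert a A)
  obtain d1 where d1: "d1 > 0" "\<forall>x y. \<bar>x - y\<bar> < d1 \<longrightarrow> Q a x y" using insert by blast
  obtain d2 where d2: "d2 > 0" "\<forall>a\<in>A. \<forall>x y. \<bar>x - y\<bar> < d2 \<longrightarrow> Q a x y" using insert by blast
  show ?case using d1 d2 by (intro exI[of _ "min d1 d2"]) auto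
qed

lemma sq_add_ge: "(a + b)\<^sup>2 \<ge> a\<^sup>2 / 2 - b\<^sup>2" for a b :: real
proof -
  have "(a + b)\<^sup>2 - (a\<^sup>2 / 2 - b\<^sup>2) = (a + 2*b)\<^sup>2 / 2" by (simp add: power2_eq_square field_simps)
  moreover have "(a + 2*b)\<^sup>2 / 2 \<ge> 0" by simp
  ultimately show ?thesis by linarith
qed

lemma fsupp_subset_Icc:
  assumes "\<And>x. h x \<noteq> 0 \<Longrightarrow> x \<in> {a..b}"
  shows "fsupp h \<subseteq> {a..b}"
  unfolding fsupp_def by (rule closure_minimal) (use assms in auto)

lemma emeasure_fsupp_le:
  assumes "\<And>x. h x \<noteq> 0 \<Longrightarrow> x \<in> {a..b}" and "a \<le> b"
  shows "emeasure lborel (fsupp h) \<le> ennreal (b - a)"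
proof -
  have "fsupp h \<subseteq> {a..b}" using assms(1) by (rule fsupp_subset_Icc)
  then have "emeasure lborel (fsupp h) \<le> emeasure lborel {a..b}" by (rule emeasure_mono) simp
  then show ?thesis using assms(2) by simp
qed

section \<open>The semi-regular mesh\<close>

locale semiregular_mesh =
  fixes hl hr :: real
  assumes hl: "hl > 0" and hr: "hr > 0"
begin

abbreviation t :: "int \<Rightarrow> real" where "t \<equiv> mesh hl hr"

lemma mesh_nonneg: "i \<ge> 0 \<Longrightarrow> t i = of_int i * hr" by (simp add: mesh_def)
lemma mesh_nonpos: "i \<le> 0 \<Longrightarrow> t i = of_int i * hl" by (auto simp: mesh_def)

lemma mesh_strict_mono: "strict_mono t"
  by (rule strict_monoI, unfold mesh_def)
     (use hl hr in \<open>smt (verit) mult_less_cancel_right mult_nonneg_nonneg mult_neg_pos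
        of_int_less_iff of_int_0_le_iff of_int_less_0_iff\<close>)

lemma mesh_less_iff: "t a < t b \<longleftrightarrow> a < b"
  using mesh_strict_mono by (rule strict_mono_less)

lemma mesh_le_iff: "t a \<le> t b \<longleftrightarrow> a \<le> b"
  using mesh_strict_mono by (rule strict_mono_less_eq)

lemma inj_on_mesh: "inj_on t S"
  using strict_mono_imp_inj_on[OF mesh_strict_mono] inj_on_subset by blast

lemma mesh_mult: "c > 0 \<Longrightarrow> t (c * m) = of_int c * t m"
  by (auto simp: mesh_def mult_less_0_iff)

lemma mesh_pow2_div: "t (2 ^ j * m) / 2 ^ j = t m"
  using mesh_mult[of "2 ^ j" m] by simp

lemma mesh_diff_le: "a \<le> b \<Longrightarrow> t b - t a \<le> of_int (b - a) * (hl + hr)"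
  unfolding mesh_def using hl hr
  by (smt (verit, ccfv_SIG) mult_nonpos_nonneg of_int_add of_int_less_0_iff
      ring_class.ring_distribs(1,2) split_mult_pos_le)

definition min_step where "min_step = min hl hr"

lemma min_step_pos: "min_step > 0" unfolding min_step_def using hl hr by simp

lemma mesh_step_ge: "t (m+1) - t m \<ge> min_step"
  by (cases "m \<ge> 0") (simp_all add: mesh_nonneg mesh_nonpos min_step_def algebra_simps)

lemma mesh_gap: "m1 < m2 \<Longrightarrow> t m2 - t m1 \<ge> min_step"
  using mesh_step_ge[of m1] mesh_le_iff[of "m1+1" m2] by linarith

lemma near_node_in_cell: "\<bar>x - t m\<bar> < min_step \<Longrightarrow> t (m-1) < x \<and> x < t (m+1)"
  using mesh_step_ge[of m] mesh_step_ge[of "m-1"] by auto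

lemma mesh_cell: "\<exists>m. t m \<le> x \<and> x < t (m+1)"
proof (cases "x \<ge> 0")
  case True
  define m where "m = \<lfloor>x / hr\<rfloor>"
  have "of_int m \<le> x / hr" "x / hr < of_int m + 1" "m \<ge> 0"
    unfolding m_def using True hr by simp_all
  then show ?thesis using hr mesh_nonneg[of m] mesh_nonneg[of "m+1"]
    by (intro exI[of _ m]) (simp add: field_simps)
next
  case False
  define m where "m = \<lfloor>x / hl\<rfloor>"
  have "of_int m \<le> x / hl" "x / hl < of_int m + 1" "m < 0"
    unfolding m_def using False hl by (simp_all add: divide_less_0_iff)
  then show ?thesis using hl mesh_nonpos[of m] mesh_nonpos[of "m+1"]
    by (intro exI[of _ m]) (simp add: field_simps)
qed

lemma scaled_mesh_less_iff: "t a / 2 ^ j < t b / 2 ^ j \<longleftrightarrow> a < b"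
  using mesh_less_iff[of a b] by (simp add: divide_less_cancel)

lemma scaled_mesh_le_iff: "t a / 2 ^ j \<le> t b / 2 ^ j \<longleftrightarrow> a \<le> b"
  using mesh_le_iff[of a b] by (simp add: divide_le_cancel)

lemma scaled_mesh_cell: "\<exists>m. t m / 2 ^ j \<le> x \<and> x < t (m+1) / 2 ^ j"
  using mesh_cell[of "2 ^ j * x"] by (simp add: field_simps)

abbreviation mesh_box :: "nat \<Rightarrow> real set" where "mesh_box N \<equiv> {t (- int N) .. t (int N)}"

lemma in_mesh_box: "\<exists>N. x \<in> mesh_box N"
proof -
  obtain N where N: "\<bar>x\<bar> < real N * min_step" using ex_less_of_nat_mult[OF min_step_pos] by blast
  have "real N * min_step \<le> real N * hr" "real N * min_step \<le> real N * hl"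
    by (intro mult_left_mono; simp add: min_step_def)+
  then have "t (- int N) \<le> x" "x \<le> t (int N)"
    using N mesh_nonpos[of "- int N"] mesh_nonneg[of "int N"] by auto
  then show ?thesis by auto
qed

lemma mesh_box_open_cell:
  assumes "x \<in> mesh_box N"
  shows "\<exists>m \<in> {- int N .. int N}. t (m-1) < x \<and> x < t (m+1)"
proof -
  obtain m where m: "t m \<le> x" "x < t (m+1)" using mesh_cell by blast
  then have "t (- int N) < t (m+1)" "t m \<le> t (int N)" using assms by auto
  then have "m \<in> {- int N .. int N}" unfolding mesh_less_iff mesh_le_iff by simp
  moreover have "t (m-1) < x" using m(1) mesh_less_iff[of "m-1" m] by simp
  ultimately show ?thesis using m(2) by blast
qed

lemma mesh_open_cell: "\<exists>m. t (m-1) < x \<and> x < t (m+1)"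
  using in_mesh_box mesh_box_open_cell by blast

end

section \<open>The subdivision scheme\<close>

locale semiregular_DD = semiregular_mesh +
  fixes n :: nat
  assumes n1: "n \<ge> 1"
begin

definition stencil :: "int \<Rightarrow> int set" where "stencil k = {k - int n + 1 .. k + int n}"

lemma card_stencil: "card (stencil k) = 2 * n" unfolding stencil_def by simp
lemma finite_stencil: "finite (stencil k)" unfolding stencil_def by simp

definition row_spec :: "int \<Rightarrow> (int \<Rightarrow> real) \<Rightarrow> bool" where
  "row_spec k w \<longleftrightarrow> (\<forall>j. j \<notin> stencil k \<longrightarrow> w j = 0) \<and>
      (\<forall>\<alpha><2*n. (\<Sum>j\<in>stencil k. w j * t j ^ \<alpha>) = (t (2*k+1) / 2) ^ \<alpha>)"

lemma ex1_row_spec: "\<exists>!w. row_spec k w"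
proof -
  obtain w where "(\<forall>j. j \<notin> stencil k \<longrightarrow> w j = 0) \<and>
      (\<forall>\<alpha><2*n. (\<Sum>j\<in>stencil k. w j * t j ^ \<alpha>) = (t (2*k+1) / 2) ^ \<alpha>)"
    using moment_weights_exist[OF finite_stencil inj_on_mesh card_stencil] by blast
  moreover have "w' = w" if "row_spec k w'" "row_spec k w" for w' w
    using that unfolding row_spec_def
    by (intro moment_weights_unique[OF finite_stencil inj_on_mesh card_stencil]) auto
  ultimately show ?thesis unfolding row_spec_def by blast
qed

lemma DD_row_eq_The: "DD_row hl hr n k = (THE w. row_spec k w)"
  unfolding DD_row_def row_spec_def stencil_def ..

lemma DD_row_spec: "row_spec k (DD_row hl hr n k)"
  unfolding DD_row_eq_The by (rule theI'[OF ex1_row_spec])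

lemma DD_row_unique: "row_spec k w \<Longrightarrow> DD_row hl hr n k = w"
  unfolding DD_row_eq_The by (rule the1_equality[OF ex1_row_spec])

lemma DD_row_shift_uniform:
  assumes h1: "\<And>l. l \<in> stencil k \<Longrightarrow> t l = of_int l * h"
    and h1': "\<And>l. l \<in> stencil (k+c) \<Longrightarrow> t l = of_int l * h"
    and h2: "t (2*k+1) = of_int (2*k+1) * h" and h3: "t (2*(k+c)+1) = of_int (2*(k+c)+1) * h"
  shows "DD_row hl hr n (k+c) (l + c) = DD_row hl hr n k l"
proof -
  define w where "w = DD_row hl hr n k"
  have Rw: "row_spec k w" unfolding w_def by (rule DD_row_spec)
  have "row_spec (k+c) (\<lambda>l. w (l - c))"
    unfolding row_spec_def
  proof (intro conjI allI impI)
    fix j assume "j \<notin> stencil (k+c)"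
    then have "j - c \<notin> stencil k" unfolding stencil_def by auto
    then show "w (j - c) = 0" using Rw unfolding row_spec_def by blast
  next
    fix \<alpha> :: nat assume a: "\<alpha> < 2*n"
    have "(\<Sum>j\<in>stencil (k+c). w (j - c) * t j ^ \<alpha>) = (\<Sum>j\<in>stencil k. w j * t (j + c) ^ \<alpha>)"
      unfolding stencil_def by (subst sum_int_interval_shift[where c = c]) (simp add: algebra_simps)
    also have "\<dots> = (\<Sum>j\<in>stencil k. w j * (t j + of_int c * h) ^ \<alpha>)"
    proof (rule sum.cong[OF refl])
      fix j assume j: "j \<in> stencil k"
      have "j + c \<in> stencil (k+c)" using j unfolding stencil_def by auto
      then have "t (j + c) = of_int (j + c) * h" by (rule h1')
      then show "w j * t (j + c) ^ \<alpha> = w j * (t j + of_int c * h) ^ \<alpha>"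
        using h1[OF j] by (simp add: algebra_simps)
    qed
    also have "\<dots> = (t (2*k+1) / 2 + of_int c * h) ^ \<alpha>"
      using Rw a unfolding row_spec_def by (intro moment_weights_translate[OF finite_stencil]) auto
    also have "\<dots> = (t (2*(k+c)+1) / 2) ^ \<alpha>"
      unfolding h2 h3 by (rule arg_cong[where f="\<lambda>z. z^\<alpha>"]) (simp add: field_simps)
    finally show "(\<Sum>j\<in>stencil (k+c). w (j - c) * t j ^ \<alpha>) = (t (2*(k+c)+1) / 2) ^ \<alpha>" .
  qed
  then have "DD_row hl hr n (k+c) = (\<lambda>l. w (l - c))" by (rule DD_row_unique)
  then show ?thesis unfolding w_def by simp
qed

lemma DD_row_shift_right:
  assumes k: "k \<ge> int n - 1" and c: "c \<ge> 0"
  shows "DD_row hl hr n (k+c) (l + c) = DD_row hl hr n k l"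
proof (rule DD_row_shift_uniform[where h = hr])
  show "t l = of_int l * hr" if "l \<in> stencil k" for l using that k by (intro mesh_nonneg) (auto simp: stencil_def)
  show "t l = of_int l * hr" if "l \<in> stencil (k+c)" for l using that k c by (intro mesh_nonneg) (auto simp: stencil_def)
  show "t (2*k+1) = of_int (2*k+1) * hr" using k n1 by (intro mesh_nonneg) simp
  show "t (2*(k+c)+1) = of_int (2*(k+c)+1) * hr" using k c n1 by (intro mesh_nonneg) simp
qed

lemma DD_row_shift_left:
  assumes k: "k + c \<le> - int n - 1" and c: "c \<ge> 0"
  shows "DD_row hl hr n (k+c) (l + c) = DD_row hl hr n k l"
proof (rule DD_row_shift_uniform[where h = hl])
  show "t l = of_int l * hl" if "l \<in> stencil k" for l using that k c by (intro mesh_nonpos) (auto simp: stencil_def)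
  show "t l = of_int l * hl" if "l \<in> stencil (k+c)" for l using that k by (intro mesh_nonpos) (auto simp: stencil_def)
  show "t (2*k+1) = of_int (2*k+1) * hl" using k c n1 by (intro mesh_nonpos) simp
  show "t (2*(k+c)+1) = of_int (2*(k+c)+1) * hl" using k c n1 by (intro mesh_nonpos) simp
qed

abbreviation P where "P \<equiv> DD_apply hl hr n"

lemma P_even: "P v (2*i) = v i"
proof -
  have "P v (2*i) = (\<Sum>l\<in>{i - int n + 1 .. i + int n}. (if l = i then v l else 0))"
    unfolding DD_apply_def DD_mat_def by (intro sum.cong) auto
  also have "\<dots> = v i" using n1 by simp
  finally show ?thesis .
qed

lemma P_odd: "P v (2*k+1) = (\<Sum>l\<in>stencil k. DD_row hl hr n k l * v l)"
proof -
  have d: "(2*k+1) div 2 = k" by simp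
  show ?thesis unfolding DD_apply_def DD_mat_def d stencil_def by simp
qed

lemma P_zero_below:
  assumes v: "\<And>i. i < a \<Longrightarrow> v i = 0" and i: "i < 2*a - 2*int n + 1"
  shows "P v i = 0"
proof (cases i rule: int_even_odd_cases)
  case (1 k) then show ?thesis using v i n1 by (simp add: P_even)
next
  case (2 k)
  have "(\<Sum>l\<in>stencil k. DD_row hl hr n k l * v l) = 0"
    by (rule sum.neutral) (use v i 2 in \<open>auto simp: stencil_def\<close>)
  then show ?thesis using 2 P_odd by simp
qed

lemma P_zero_above:
  assumes v: "\<And>i. i > b \<Longrightarrow> v i = 0" and i: "i > 2*b + 2*int n - 1"
  shows "P v i = 0"
proof (cases i rule: int_even_odd_cases)
  case (1 k) then show ?thesis using v i n1 by (simp add: P_even)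
next
  case (2 k)
  have "(\<Sum>l\<in>stencil k. DD_row hl hr n k l * v l) = 0"
    by (rule sum.neutral) (use v i 2 in \<open>auto simp: stencil_def\<close>)
  then show ?thesis using 2 P_odd by simp
qed

lemma P_shift_right:
  assumes v: "\<And>i. i < a \<Longrightarrow> v i = 0" and a: "a \<ge> 2*int n - 1" and c: "c \<ge> 0"
  shows "P (\<lambda>i. v (i - c)) i = P v (i - 2*c)"
proof (cases i rule: int_even_odd_cases)
  case (1 k)
  have "i - 2*c = 2*(k-c)" using 1 by simp
  then show ?thesis using 1 P_even[of "\<lambda>i. v (i - c)" k] P_even[of v "k-c"] by simp
next
  case (2 k)
  have e: "i - 2*c = 2*(k-c)+1" using 2 by simp
  have "P v (i - 2*c) = (\<Sum>l\<in>stencil (k-c). DD_row hl hr n (k-c) l * v l)" unfolding e P_odd ..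
  also have "\<dots> = (\<Sum>l\<in>stencil k. DD_row hl hr n (k-c) (l - c) * v (l - c))"
    unfolding stencil_def by (subst sum_int_interval_shift[where c = "-c"]) (simp add: algebra_simps)
  also have "\<dots> = (\<Sum>l\<in>stencil k. DD_row hl hr n k l * v (l - c))"
  proof (cases "k - c \<ge> int n - 1")
    case True
    show ?thesis
    proof (rule sum.cong[OF refl])
      fix l
      have "DD_row hl hr n ((k-c)+c) ((l-c)+c) = DD_row hl hr n (k-c) (l-c)"
        by (rule DD_row_shift_right[OF True c])
      then show "DD_row hl hr n (k-c) (l - c) * v (l - c) = DD_row hl hr n k l * v (l - c)" by simp
    qed
  next
    case False
    have "v (l - c) = 0" if "l \<in> stencil k" for l
      using that False a by (intro v) (auto simp: stencil_def)
    then show ?thesis by simp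
  qed
  also have "\<dots> = P (\<lambda>i. v (i - c)) i" unfolding 2 P_odd ..
  finally show ?thesis ..
qed

lemma P_shift_left:
  assumes v: "\<And>i. i > b \<Longrightarrow> v i = 0" and b: "b \<le> - 2*int n" and c: "c \<ge> 0"
  shows "P (\<lambda>i. v (i + c)) i = P v (i + 2*c)"
proof (cases i rule: int_even_odd_cases)
  case (1 k)
  have "i + 2*c = 2*(k+c)" using 1 by simp
  then show ?thesis using 1 P_even[of "\<lambda>i. v (i + c)" k] P_even[of v "k+c"] by simp
next
  case (2 k)
  have e: "i + 2*c = 2*(k+c)+1" using 2 by simp
  have "P v (i + 2*c) = (\<Sum>l\<in>stencil (k+c). DD_row hl hr n (k+c) l * v l)" unfolding e P_odd ..
  also have "\<dots> = (\<Sum>l\<in>stencil k. DD_row hl hr n (k+c) (l + c) * v (l + c))"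
    unfolding stencil_def by (subst sum_int_interval_shift[where c = "c"]) (simp add: algebra_simps)
  also have "\<dots> = (\<Sum>l\<in>stencil k. DD_row hl hr n k l * v (l + c))"
  proof (cases "k + c \<le> - int n - 1")
    case True
    show ?thesis by (rule sum.cong[OF refl]) (simp add: DD_row_shift_left[OF True c])
  next
    case False
    have "v (l + c) = 0" if "l \<in> stencil k" for l
      using that False b by (intro v) (auto simp: stencil_def)
    then show ?thesis by simp
  qed
  also have "\<dots> = P (\<lambda>i. v (i + c)) i" unfolding 2 P_odd ..
  finally show ?thesis ..
qed

definition subdiv :: "int \<Rightarrow> nat \<Rightarrow> int \<Rightarrow> real" where "subdiv k j = (P ^^ j) (unit_seq k)"

lemma subdiv_Suc: "subdiv k (Suc j) = P (subdiv k j)" unfolding subdiv_def by simp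
lemma subdiv_0: "subdiv k 0 = unit_seq k" unfolding subdiv_def by simp

lemma subdiv_coarse_node: "subdiv k j (2^j * m) = unit_seq k m"
proof (induction j arbitrary: m)
  case 0 then show ?case by (simp add: subdiv_0)
next
  case (Suc j)
  have "subdiv k (Suc j) (2^(Suc j) * m) = P (subdiv k j) (2 * (2^j * m))" by (simp add: subdiv_Suc mult_ac)
  also have "\<dots> = subdiv k j (2^j * m)" by (rule P_even)
  finally show ?case using Suc by simp
qed

lemma subdiv_zero_below: "i < 2^j * (k - 2*int n + 1) + 2*int n - 1 \<Longrightarrow> subdiv k j i = 0"
proof (induction j arbitrary: i)
  case 0 then show ?case by (simp add: subdiv_0 unit_seq_def)
next
  case (Suc j)
  show ?case unfolding subdiv_Suc
    by (rule P_zero_below[where a = "2^j * (k - 2*int n + 1) + 2*int n - 1"])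
       (use Suc in \<open>auto simp: algebra_simps\<close>)
qed

lemma subdiv_zero_above: "i > 2^j * (k + 2*int n - 1) - 2*int n + 1 \<Longrightarrow> subdiv k j i = 0"
proof (induction j arbitrary: i)
  case 0 then show ?case by (simp add: subdiv_0 unit_seq_def)
next
  case (Suc j)
  show ?case unfolding subdiv_Suc
    by (rule P_zero_above[where b = "2^j * (k + 2*int n - 1) - 2*int n + 1"])
       (use Suc in \<open>auto simp: algebra_simps\<close>)
qed

lemma subdiv_zero_le: "i \<le> 2^j * (k - 2*int n + 1) \<Longrightarrow> subdiv k j i = 0"
  using subdiv_zero_below n1 by force
lemma subdiv_zero_ge: "i \<ge> 2^j * (k + 2*int n - 1) \<Longrightarrow> subdiv k j i = 0"
  using subdiv_zero_above n1 by force

lemma subdiv_shift_right: assumes k: "k \<ge> 2*int n - 1" shows "subdiv (k+1) j i = subdiv k j (i - 2^j)"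
proof (induction j arbitrary: i)
  case 0 then show ?case by (simp add: subdiv_0 unit_seq_def)
next
  case (Suc j)
  have e: "subdiv (k+1) j = (\<lambda>i. subdiv k j (i - 2^j))" using Suc by auto
  have "subdiv k j i = 0" if "i < 2*int n - 1" for i
  proof (rule subdiv_zero_below)
    have "(2::int)^j * (k - 2*int n + 1) \<ge> 0" using k by simp
    then show "i < 2^j * (k - 2*int n + 1) + 2*int n - 1" using that by linarith
  qed
  then have "P (\<lambda>i. subdiv k j (i - 2^j)) i = P (subdiv k j) (i - 2 * 2^j)"
    by (intro P_shift_right[where a = "2*int n - 1"]) auto
  then show ?case unfolding subdiv_Suc e by simp
qed

lemma subdiv_shift_left: assumes k: "k \<le> - 2*int n" shows "subdiv (k-1) j i = subdiv k j (i + 2^j)"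
proof (induction j arbitrary: i)
  case 0 then show ?case by (simp add: subdiv_0 unit_seq_def)
next
  case (Suc j)
  have e: "subdiv (k-1) j = (\<lambda>i. subdiv k j (i + 2^j))" using Suc by auto
  have "subdiv k j i = 0" if "i > - 2*int n" for i
  proof (rule subdiv_zero_above)
    have "(2::int)^j * (k + 2*int n - 1) \<le> -1"
    proof -
      have "(2::int)^j * (k + 2*int n - 1) \<le> (2::int)^j * (-1)" using k by (intro mult_left_mono) auto
      also have "\<dots> \<le> -1" by simp
      finally show ?thesis .
    qed
    then show "i > 2^j * (k + 2*int n - 1) - 2*int n + 1" using that by linarith
  qed
  then have "P (\<lambda>i. subdiv k j (i + 2^j)) i = P (subdiv k j) (i + 2 * 2^j)"
    by (intro P_shift_left[where b = "- 2*int n"]) auto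
  then show ?case unfolding subdiv_Suc e by simp
qed

definition interp :: "nat \<Rightarrow> (int \<Rightarrow> real) \<Rightarrow> real \<Rightarrow> real" where
  "interp j c x = pwlin (\<lambda>m. t m / 2^j) c x"

lemma interp_on_cell:
  assumes "t m / 2^j \<le> x" "x < t (m+1) / 2^j"
  shows "interp j c x = c m + (c (m+1) - c m) * (x - t m / 2^j) / (t (m+1) / 2^j - t m / 2^j)"
proof -
  have "(THE m. t m / 2^j \<le> x \<and> x < t (m+1) / 2^j) = m"
  proof (rule the_equality)
    show "t m / 2^j \<le> x \<and> x < t (m+1) / 2^j" using assms by simp
  next
    fix m' assume m': "t m' / 2^j \<le> x \<and> x < t (m'+1) / 2^j"
    have "\<not> m' < m"
    proof
      assume "m' < m" then have "t (m'+1) / 2^j \<le> t m / 2^j" using scaled_mesh_le_iff by simp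
      then show False using m' assms by linarith
    qed
    moreover have "\<not> m < m'"
    proof
      assume "m < m'" then have "t (m+1) / 2^j \<le> t m' / 2^j" using scaled_mesh_le_iff by simp
      then show False using m' assms by linarith
    qed
    ultimately show "m' = m" by linarith
  qed
  then show ?thesis unfolding interp_def pwlin_def Let_def by simp
qed

lemma interp_node: "interp j c (t m / 2^j) = c m"
  by (subst interp_on_cell[of m]) (auto simp: scaled_mesh_less_iff)

lemma interp_zero_left:
  assumes c: "\<And>i. i \<le> A \<Longrightarrow> c i = 0" and x: "x \<le> t A / 2^j"
  shows "interp j c x = 0"
proof -
  obtain m where m: "t m / 2^j \<le> x" "x < t (m+1) / 2^j" using scaled_mesh_cell by blast
  have "m \<le> A" using m x scaled_mesh_le_iff[of m j A] by linarith
  show ?thesis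
  proof (cases "m = A")
    case True
    then have "x = t m / 2^j" using m(1) x unfolding True by linarith
    then show ?thesis using interp_node c True by simp
  next
    case False
    then show ?thesis using interp_on_cell[OF m] c \<open>m \<le> A\<close> by simp
  qed
qed

lemma interp_zero_right:
  assumes c: "\<And>i. i \<ge> B \<Longrightarrow> c i = 0" and x: "x \<ge> t B / 2^j"
  shows "interp j c x = 0"
proof -
  obtain m where m: "t m / 2^j \<le> x" "x < t (m+1) / 2^j" using scaled_mesh_cell by blast
  have "B < m + 1" using m x scaled_mesh_less_iff[of B j "m+1"] by linarith
  then show ?thesis using interp_on_cell[OF m] c by simp
qed

lemma DD_level_eq_interp: "DD_level hl hr n j (unit_seq k) = interp j (subdiv k j)"
  unfolding DD_level_def interp_def subdiv_def by (rule ext) simp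

lemma DD_level_node: "DD_level hl hr n j (unit_seq k) (t m) = unit_seq k m"
  unfolding DD_level_eq_interp using interp_node[of j "subdiv k j" "2^j * m"] mesh_pow2_div subdiv_coarse_node by simp

lemma DD_level_zero_outside:
  assumes "x \<le> t (k - 2*int n + 1) \<or> x \<ge> t (k + 2*int n - 1)"
  shows "DD_level hl hr n j (unit_seq k) x = 0"
  using assms
proof
  assume x: "x \<le> t (k - 2*int n + 1)"
  show ?thesis unfolding DD_level_eq_interp
    by (rule interp_zero_left[where A = "2^j * (k - 2*int n + 1)"]) (use subdiv_zero_le x mesh_pow2_div in auto)
next
  assume x: "x \<ge> t (k + 2*int n - 1)"
  show ?thesis unfolding DD_level_eq_interp
    by (rule interp_zero_right[where B = "2^j * (k + 2*int n - 1)"]) (use subdiv_zero_ge x mesh_pow2_div in auto)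
qed

lemma DD_level_shift_right:
  assumes k: "k \<ge> 2*int n - 1"
  shows "DD_level hl hr n j (unit_seq (k+1)) (x + hr) = DD_level hl hr n j (unit_seq k) x"
proof (cases "x < 0")
  case True
  have "t 1 \<le> t (k + 1 - 2*int n + 1)" using k by (subst mesh_le_iff) simp
  then have a: "x + hr \<le> t (k + 1 - 2*int n + 1)" using True mesh_nonneg[of 1] by simp
  have "0 \<le> t (k - 2*int n + 1)" using k mesh_le_iff[of 0 "k - 2*int n + 1"] by (simp add: mesh_def)
  then have b: "x \<le> t (k - 2*int n + 1)" using True by simp
  show ?thesis using DD_level_zero_outside a b by simp
next
  case False
  obtain m where m: "t m / 2^j \<le> x" "x < t (m+1) / 2^j" using scaled_mesh_cell by blast
  have m0: "m \<ge> 0"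
  proof (rule ccontr)
    assume "\<not> m \<ge> 0" then have "t (m+1) \<le> t 0" using mesh_le_iff by simp
    then have "t (m+1) / 2^j \<le> 0" by (simp add: mesh_def divide_le_0_iff)
    then show False using m False by linarith
  qed
  define M :: int where "M = 2^j"
  have sh: "t (i + M) / 2^j = t i / 2^j + hr" if "i \<ge> 0" for i
    using that mesh_nonneg[of i] mesh_nonneg[of "i+M"] by (simp add: M_def field_simps)
  have m': "t (m + M) / 2^j \<le> x + hr" "x + hr < t (m + M + 1) / 2^j"
    using m sh[of m] sh[of "m+1"] m0 by (simp_all add: add_ac)
  have "interp j (subdiv (k+1) j) (x + hr) = subdiv (k+1) j (m+M) + (subdiv (k+1) j (m+M+1) - subdiv (k+1) j (m+M)) *
        (x + hr - t (m+M) / 2^j) / (t (m+M+1) / 2^j - t (m+M) / 2^j)"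
    by (rule interp_on_cell[OF m'])
  also have "\<dots> = subdiv k j m + (subdiv k j (m+1) - subdiv k j m) * (x - t m / 2^j) / (t (m+1) / 2^j - t m / 2^j)"
    using sh[of m] sh[of "m+1"] m0 subdiv_shift_right[OF k, of j] by (simp add: M_def add_ac)
  also have "\<dots> = interp j (subdiv k j) x" by (rule interp_on_cell[OF m, symmetric])
  finally show ?thesis unfolding DD_level_eq_interp .
qed

lemma DD_level_shift_left:
  assumes k: "k \<le> - 2*int n"
  shows "DD_level hl hr n j (unit_seq (k-1)) (x - hl) = DD_level hl hr n j (unit_seq k) x"
proof (cases "x \<ge> 0")
  case True
  have "t (k - 1 + 2*int n - 1) \<le> t (-1)" using k by (subst mesh_le_iff) simp
  then have a: "x - hl \<ge> t (k - 1 + 2*int n - 1)" using True mesh_nonpos[of "-1"] by simp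
  have "t (k + 2*int n - 1) \<le> 0" using k mesh_le_iff[of "k + 2*int n - 1" 0] by (simp add: mesh_def)
  then have b: "x \<ge> t (k + 2*int n - 1)" using True by simp
  show ?thesis using DD_level_zero_outside a b by simp
next
  case False
  obtain m where m: "t m / 2^j \<le> x" "x < t (m+1) / 2^j" using scaled_mesh_cell by blast
  have m0: "m + 1 \<le> 0"
  proof (rule ccontr)
    assume "\<not> m + 1 \<le> 0" then have "t 0 \<le> t m" using mesh_le_iff by simp
    then have "0 \<le> t m / 2^j" by (simp add: mesh_def)
    then show False using m False by linarith
  qed
  define M :: int where "M = 2^j"
  have sh: "t (i - M) / 2^j = t i / 2^j - hl" if "i \<le> 0" for i
  proof -
    have "(0::int) \<le> 2^j" by simp
    then have "i - M \<le> 0" using that unfolding M_def by linarith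
    then show ?thesis using that mesh_nonpos[of i] mesh_nonpos[of "i-M"] by (simp add: M_def field_simps)
  qed
  have m': "t (m - M) / 2^j \<le> x - hl" "x - hl < t (m - M + 1) / 2^j"
    using m sh[of m] sh[of "m+1"] m0 by (simp_all add: algebra_simps)
  have "interp j (subdiv (k-1) j) (x - hl) = subdiv (k-1) j (m-M) + (subdiv (k-1) j (m-M+1) - subdiv (k-1) j (m-M)) *
        (x - hl - t (m-M) / 2^j) / (t (m-M+1) / 2^j - t (m-M) / 2^j)"
    by (rule interp_on_cell[OF m'])
  also have "\<dots> = subdiv k j m + (subdiv k j (m+1) - subdiv k j m) * (x - t m / 2^j) / (t (m+1) / 2^j - t m / 2^j)"
  proof -
    have e1: "t (m - M + 1) = t (m + 1 - M)" by (simp add: algebra_simps)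
    have e2: "subdiv (k-1) j (m-M+1) = subdiv k j (m+1)" "subdiv (k-1) j (m-M) = subdiv k j m"
      using subdiv_shift_left[OF k, of j] by (simp_all add: M_def algebra_simps)
    show ?thesis unfolding e1 e2 using sh[of m] sh[of "m+1"] m0 by simp
  qed
  also have "\<dots> = interp j (subdiv k j) x" by (rule interp_on_cell[OF m, symmetric])
  finally show ?thesis unfolding DD_level_eq_interp .
qed

end

section \<open>The scaling functions\<close>

locale DD_scaling_functions = semiregular_DD +
  fixes \<phi> :: "int \<Rightarrow> real \<Rightarrow> real"
  assumes limit: "\<And>k. continuous_on UNIV (\<phi> k) \<and>
                 uniform_limit UNIV (\<lambda>j. DD_level hl hr n j (unit_seq k)) (\<phi> k) sequentially"
    and pos_int: "\<And>k. integral UNIV (\<phi> k) > 0"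
begin

lemma phi_pointwise_limit: "(\<lambda>j. DD_level hl hr n j (unit_seq k) x) \<longlonglongrightarrow> \<phi> k x"
  using limit[of k] by (intro tendsto_uniform_limitI) auto

lemma phi_continuous: "continuous_on UNIV (\<phi> k)" using limit by blast

lemma phi_eq_if_levels_const:
  assumes "\<And>j. DD_level hl hr n j (unit_seq k) x = c"
  shows "\<phi> k x = c"
  using LIMSEQ_unique[OF phi_pointwise_limit[of k x]] assms by simp

lemma phi_eq_if_levels_eq:
  assumes "\<And>j. DD_level hl hr n j (unit_seq k) x = DD_level hl hr n j (unit_seq k') x'"
  shows "\<phi> k x = \<phi> k' x'"
  using LIMSEQ_unique[OF phi_pointwise_limit[of k x]] phi_pointwise_limit[of k' x'] assms by simp

lemma phi_zero_outside:
  "x \<le> t (k - 2*int n + 1) \<or> x \<ge> t (k + 2*int n - 1) \<Longrightarrow> \<phi> k x = 0"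
  by (rule phi_eq_if_levels_const) (rule DD_level_zero_outside)

lemma phi_node: "\<phi> k (t m) = unit_seq k m"
  by (rule phi_eq_if_levels_const) (rule DD_level_node)

lemma phi_shift_right: "k \<ge> 2*int n - 1 \<Longrightarrow> \<phi> (k+1) (x + hr) = \<phi> k x"
  by (rule phi_eq_if_levels_eq) (rule DD_level_shift_right)

lemma phi_shift_left: "k \<le> - 2*int n \<Longrightarrow> \<phi> (k-1) (x - hl) = \<phi> k x"
  by (rule phi_eq_if_levels_eq) (rule DD_level_shift_left)

lemma phi_translate_right: "k \<ge> 2*int n - 1 \<Longrightarrow> \<phi> k x = \<phi> (2*int n - 1) (x - of_int (k - (2*int n - 1)) * hr)"
proof (induction k arbitrary: x rule: int_ge_induct)
  case base then show ?case by simp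
next
  case (step k)
  have "\<phi> (k+1) x = \<phi> (k+1) ((x - hr) + hr)" by simp
  also have "\<dots> = \<phi> k (x - hr)" by (rule phi_shift_right[OF step(1)])
  also have "\<dots> = \<phi> (2*int n - 1) (x - hr - of_int (k - (2*int n - 1)) * hr)" by (rule step(2))
  also have "x - hr - of_int (k - (2*int n - 1)) * hr = x - of_int (k + 1 - (2*int n - 1)) * hr"
    by (simp add: algebra_simps)
  finally show ?case .
qed

lemma phi_translate_left: "k \<le> - 2*int n \<Longrightarrow> \<phi> k x = \<phi> (- 2*int n) (x - of_int (k + 2*int n) * hl)"
proof (induction k arbitrary: x rule: int_le_induct)
  case base then show ?case by simp
next
  case (step k)
  have "\<phi> (k-1) x = \<phi> (k-1) ((x + hl) - hl)" by simp
  also have "\<dots> = \<phi> k (x + hl)" by (rule phi_shift_left[OF step(1)])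
  also have "\<dots> = \<phi> (- 2*int n) (x + hl - of_int (k + 2*int n) * hl)" by (rule step(2))
  also have "x + hl - of_int (k + 2*int n) * hl = x - of_int (k - 1 + 2*int n) * hl"
    by (simp add: algebra_simps)
  finally show ?case .
qed

abbreviation profile_idx where "profile_idx \<equiv> {- 2*int n .. 2*int n - 1}"

lemma phi_translate_profile: "\<exists>k0\<in>profile_idx. \<exists>s. \<forall>x. \<phi> k x = \<phi> k0 (x - s)"
proof -
  consider "k \<ge> 2*int n - 1" | "k \<le> - 2*int n" | "k \<in> profile_idx"
    by (cases "k \<ge> 2*int n - 1"; cases "k \<le> - 2*int n") auto
  then show ?thesis
  proof cases
    case 1
    have "\<forall>x. \<phi> k x = \<phi> (2*int n - 1) (x - of_int (k - (2*int n - 1)) * hr)" using phi_translate_right[OF 1] by blast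
    moreover have "2*int n - 1 \<in> profile_idx" using n1 by simp
    ultimately show ?thesis by blast
  next
    case 2
    have "\<forall>x. \<phi> k x = \<phi> (- 2*int n) (x - of_int (k + 2*int n) * hl)" using phi_translate_left[OF 2] by blast
    moreover have "- 2*int n \<in> profile_idx" using n1 by simp
    ultimately show ?thesis by blast
  next
    case 3 then show ?thesis by (intro bexI[of _ k] exI[of _ 0]) auto
  qed
qed

definition profile_lo where "profile_lo = t (- 4 * int n)"
definition profile_hi where "profile_hi = t (4 * int n)"

lemma profile_vanishes_outside: "k0 \<in> profile_idx \<Longrightarrow> x \<notin> {profile_lo..profile_hi} \<Longrightarrow> \<phi> k0 x = 0"
proof (rule phi_zero_outside)
  assume k0: "k0 \<in> profile_idx" and x: "x \<notin> {profile_lo..profile_hi}"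
  have "t (- 4 * int n) \<le> t (k0 - 2*int n + 1)" "t (k0 + 2*int n - 1) \<le> t (4 * int n)"
    using k0 by (simp_all add: mesh_le_iff)
  then show "x \<le> t (k0 - 2*int n + 1) \<or> x \<ge> t (k0 + 2*int n - 1)"
    using x unfolding profile_lo_def profile_hi_def by auto
qed

definition phi_int where "phi_int k = integral UNIV (\<phi> k)"

lemma phi_translate_profile_integral: "\<exists>k0\<in>profile_idx. \<exists>s. \<forall>x. \<phi> k x = \<phi> k0 (x - s) \<and> phi_int k = phi_int k0"
proof -
  obtain k0 s where k0: "k0 \<in> profile_idx" "\<And>x. \<phi> k x = \<phi> k0 (x - s)" using phi_translate_profile by blast
  have "\<phi> k = (\<lambda>x. \<phi> k0 (x - s))" using k0(2) by (rule ext)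
  then have "phi_int k = integral UNIV (\<lambda>x. \<phi> k0 (x - s))" unfolding phi_int_def by simp
  also have "\<dots> = phi_int k0" unfolding phi_int_def by (rule integral_translate_vanishing_outside_Icc[where a = profile_lo and b = profile_hi]) (use profile_vanishes_outside k0 in auto)
  finally show ?thesis using k0 by blast
qed

abbreviation \<Phi> where "\<Phi> \<equiv> scaling_fun \<phi>"

lemma Phi_eq: "\<Phi> k x = \<phi> k x / sqrt (phi_int k)" unfolding scaling_fun_def phi_int_def ..

lemma Phi_translate_profile: "\<exists>k0\<in>profile_idx. \<exists>s. \<forall>x. \<Phi> k x = \<Phi> k0 (x - s)"
proof -
  obtain k0 s where k0: "k0 \<in> profile_idx" "\<And>x. \<phi> k x = \<phi> k0 (x - s)" "phi_int k = phi_int k0"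
    using phi_translate_profile_integral[of k] by blast
  show ?thesis unfolding Phi_eq using k0 by (intro bexI[of _ k0] exI[of _ s]) auto
qed

lemma Phi_zero_outside: "x \<le> t (k - 2*int n + 1) \<or> x \<ge> t (k + 2*int n - 1) \<Longrightarrow> \<Phi> k x = 0"
  unfolding Phi_eq using phi_zero_outside by simp

lemma Phi_nonzero_between: "\<Phi> k x \<noteq> 0 \<Longrightarrow> t (k - 2*int n + 1) < x \<and> x < t (k + 2*int n - 1)"
  using Phi_zero_outside by (meson not_less)

lemma Phi_node: "\<Phi> k (t m) = unit_seq k m / sqrt (phi_int k)"
  unfolding Phi_eq phi_node ..

lemma phi_int_pos: "phi_int k > 0" unfolding phi_int_def by (rule pos_int)

lemma Phi_continuous: "continuous_on UNIV (\<Phi> k)"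
  unfolding Phi_eq by (intro continuous_intros phi_continuous) (use phi_int_pos[of k] in auto)


lemma phi_int_bounds: "\<exists>Imin Imax. 0 < Imin \<and> (\<forall>k. Imin \<le> phi_int k \<and> phi_int k \<le> Imax)"
proof -
  have fin: "finite (phi_int ` profile_idx)" "phi_int ` profile_idx \<noteq> {}" using n1 by auto
  define Imin where "Imin = Min (phi_int ` profile_idx)"
  define Imax where "Imax = Max (phi_int ` profile_idx)"
  have "Imin > 0" unfolding Imin_def using fin phi_int_pos by (subst Min_gr_iff) auto
  moreover have "Imin \<le> phi_int k \<and> phi_int k \<le> Imax" for k
  proof -
    obtain k0 where k0: "k0 \<in> profile_idx" "phi_int k = phi_int k0" using phi_translate_profile_integral[of k] by blast
    show ?thesis unfolding Imin_def Imax_def k0 using fin k0 by auto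
  qed
  ultimately show ?thesis by blast
qed

lemma Phi_profile_vanishes_outside:
  "k0 \<in> profile_idx \<Longrightarrow> x \<notin> {profile_lo..profile_hi} \<Longrightarrow> \<Phi> k0 x = 0"
  using profile_vanishes_outside by (simp add: Phi_eq)

lemma Phi_bounded: "\<exists>M. \<forall>k x. \<bar>\<Phi> k x\<bar> \<le> M"
proof -
  have "\<exists>M. \<forall>x. \<bar>\<Phi> k0 x\<bar> \<le> M" if "k0 \<in> profile_idx" for k0
    using Phi_continuous Phi_profile_vanishes_outside[OF that] by (rule bounded_vanishing_outside_Icc)
  then obtain M where M: "\<And>k0 x. k0 \<in> profile_idx \<Longrightarrow> \<bar>\<Phi> k0 x\<bar> \<le> M k0" by metis
  have "\<bar>\<Phi> k x\<bar> \<le> Max (M ` profile_idx)" for k x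
  proof -
    obtain k0 s where k0: "k0 \<in> profile_idx" "\<And>x. \<Phi> k x = \<Phi> k0 (x - s)"
      using Phi_translate_profile by blast
    then have "\<bar>\<Phi> k x\<bar> \<le> M k0" using M by simp
    also have "\<dots> \<le> Max (M ` profile_idx)" using k0(1) by simp
    finally show ?thesis .
  qed
  then show ?thesis by blast
qed

lemma Phi_uniformly_equicontinuous:
  assumes "e > 0"
  shows "\<exists>d>0. \<forall>k x y. \<bar>x - y\<bar> < d \<longrightarrow> \<bar>\<Phi> k x - \<Phi> k y\<bar> < e"
proof -
  have "\<exists>d>0. \<forall>x y. \<bar>x - y\<bar> < d \<longrightarrow> \<bar>\<Phi> k0 x - \<Phi> k0 y\<bar> < e" if "k0 \<in> profile_idx" for k0
  proof -
    have "uniformly_continuous_on UNIV (\<Phi> k0)"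
      using Phi_continuous Phi_profile_vanishes_outside[OF that]
      by (rule uniformly_continuous_vanishing_outside_Icc)
    then obtain d where "d > 0" "\<And>x y. \<bar>y - x\<bar> < d \<Longrightarrow> \<bar>\<Phi> k0 y - \<Phi> k0 x\<bar> < e"
      using assms unfolding uniformly_continuous_on_def dist_real_def by blast
    then show ?thesis by blast
  qed
  then obtain d where d: "d > 0" "\<forall>k0\<in>profile_idx. \<forall>x y. \<bar>x - y\<bar> < d \<longrightarrow> \<bar>\<Phi> k0 x - \<Phi> k0 y\<bar> < e"
    using finite_common_delta[of profile_idx "\<lambda>k0 x y. \<bar>\<Phi> k0 x - \<Phi> k0 y\<bar> < e"] by auto
  have "\<bar>\<Phi> k x - \<Phi> k y\<bar> < e" if "\<bar>x - y\<bar> < d" for k x y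
  proof -
    obtain k0 s where "k0 \<in> profile_idx" "\<And>x. \<Phi> k x = \<Phi> k0 (x - s)"
      using Phi_translate_profile by blast
    then show ?thesis using d(2) that by simp
  qed
  then show ?thesis using d(1) by blast
qed

definition Phi_L2_bound where
  "Phi_L2_bound = (\<Sum>k0\<in>profile_idx. integral UNIV (\<lambda>x. (\<Phi> k0 x)\<^sup>2))"

lemma Phi_sq_integrable: "(\<lambda>x. (\<Phi> k x)\<^sup>2) integrable_on UNIV"
proof (rule integrable_vanishing_outside_Icc[where a = "t (k - 2*int n + 1)" and b = "t (k + 2*int n - 1)"])
  show "continuous_on UNIV (\<lambda>x. (\<Phi> k x)\<^sup>2)" by (intro continuous_intros Phi_continuous)
  show "(\<Phi> k x)\<^sup>2 = 0" if "x \<notin> {t (k - 2*int n + 1) .. t (k + 2*int n - 1)}" for x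
    using that Phi_zero_outside by auto
qed

lemma Phi_sq_integral_nonneg: "integral UNIV (\<lambda>x. (\<Phi> k x)\<^sup>2) \<ge> 0"
  by (rule integral_nonneg[OF Phi_sq_integrable]) simp

lemma Phi_sq_integral_le: "integral UNIV (\<lambda>x. (\<Phi> k x)\<^sup>2) \<le> Phi_L2_bound"
proof -
  obtain k0 s where k0: "k0 \<in> profile_idx" "\<And>x. \<Phi> k x = \<Phi> k0 (x - s)"
    using Phi_translate_profile by blast
  have "integral UNIV (\<lambda>x. (\<Phi> k x)\<^sup>2) = integral UNIV (\<lambda>x. (\<Phi> k0 (x - s))\<^sup>2)" using k0 by simp
  also have "\<dots> = integral UNIV (\<lambda>x. (\<Phi> k0 x)\<^sup>2)"
    by (rule integral_translate_vanishing_outside_Icc[where a = profile_lo and b = profile_hi])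
       (simp add: Phi_profile_vanishes_outside[OF k0(1)])
  also have "\<dots> \<le> Phi_L2_bound"
    unfolding Phi_L2_bound_def using k0(1) Phi_sq_integral_nonneg by (intro member_le_sum) auto
  finally show ?thesis .
qed

lemma Phi_L2_bound_nonneg: "Phi_L2_bound \<ge> 0"
  unfolding Phi_L2_bound_def using Phi_sq_integral_nonneg by (intro sum_nonneg) auto

section \<open>Riesz bounds\<close>

definition window :: "int \<Rightarrow> int set" where "window m = {m - 2*int n + 1 .. m + 2*int n - 1}"

lemma finite_window: "finite (window m)" unfolding window_def by simp

lemma card_window: "real (card (window m)) = 4 * real n - 1"
proof -
  have "card (window m) = nat (4 * int n - 1)" unfolding window_def by simp
  then show ?thesis using n1 by simp
qed

lemma Phi_nonzero_imp_window:
  assumes "t (m-1) < x" "x < t (m+1)" "\<Phi> k x \<noteq> 0"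
  shows "k \<in> window m"
proof -
  have "t (k - 2*int n + 1) < t (m+1)" "t (m-1) < t (k + 2*int n - 1)"
    using Phi_nonzero_between[OF assms(3)] assms(1,2) by auto
  then show ?thesis unfolding window_def mesh_less_iff by auto
qed

definition synthesis :: "(int \<Rightarrow> real) \<Rightarrow> real \<Rightarrow> real" where
  "synthesis f x = (\<Sum>\<^sub>\<infinity>k. f k * \<Phi> k x)"

definition partial_synthesis :: "(int \<Rightarrow> real) \<Rightarrow> int set \<Rightarrow> real \<Rightarrow> real" where
  "partial_synthesis f K x = (\<Sum>k\<in>K. f k * \<Phi> k x)"

lemma synthesis_eq_partial_synthesis:
  assumes "t (m-1) < x" "x < t (m+1)" "finite K" "window m \<subseteq> K"
  shows "synthesis f x = partial_synthesis f K x"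
proof -
  have "synthesis f x = infsum (\<lambda>k. f k * \<Phi> k x) K"
    unfolding synthesis_def
    by (rule infsum_cong_neutral) (use assms Phi_nonzero_imp_window[OF assms(1,2)] in auto)
  also have "\<dots> = partial_synthesis f K x" unfolding partial_synthesis_def using assms(3) by simp
  finally show ?thesis .
qed

lemma partial_synthesis_continuous: "continuous_on UNIV (partial_synthesis f K)"
  unfolding partial_synthesis_def by (intro continuous_intros Phi_continuous)

abbreviation centered :: "nat \<Rightarrow> int set" where "centered N \<equiv> {- int N .. int N}"

lemma synthesis_on_mesh_box:
  "x \<in> mesh_box N \<Longrightarrow> synthesis f x = partial_synthesis f (centered (N + 2*n)) x"
proof -
  assume "x \<in> mesh_box N"
  then obtain m where m: "m \<in> centered N" "t (m-1) < x" "x < t (m+1)"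
    using mesh_box_open_cell by blast
  have "window m \<subseteq> centered (N + 2*n)" using m(1) unfolding window_def by auto
  then show ?thesis by (intro synthesis_eq_partial_synthesis[OF m(2,3)]) auto
qed

lemma partial_synthesis_zero_outside:
  "x \<notin> {t (- int N - 2*int n) .. t (int N + 2*int n)} \<Longrightarrow> partial_synthesis f (centered N) x = 0"
proof -
  assume x: "x \<notin> {t (- int N - 2*int n) .. t (int N + 2*int n)}"
  have "\<Phi> k x = 0" if k: "k \<in> centered N" for k
  proof (rule Phi_zero_outside)
    have "t (- int N - 2*int n) \<le> t (k - 2*int n + 1)" "t (k + 2*int n - 1) \<le> t (int N + 2*int n)"
      using k by (simp_all add: mesh_le_iff)
    then show "x \<le> t (k - 2*int n + 1) \<or> t (k + 2*int n - 1) \<le> x" using x by auto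
  qed
  then show ?thesis unfolding partial_synthesis_def by simp
qed

lemma partial_synthesis_sq_integrable:
  "(\<lambda>x. (partial_synthesis f (centered N) x)\<^sup>2) integrable_on UNIV"
  by (rule integrable_vanishing_outside_Icc[where a = "t (- int N - 2*int n)" and b = "t (int N + 2*int n)"])
     (use partial_synthesis_zero_outside in \<open>auto intro!: continuous_intros partial_synthesis_continuous\<close>)

text \<open>At each point at most \<open>4n - 1\<close> of the \<open>\<Phi> k\<close> are nonzero, hence Cauchy-Schwarz:\<close>

lemma partial_synthesis_sq_le:
  assumes "finite K"
  shows "(partial_synthesis f K x)\<^sup>2 \<le> (4 * real n - 1) * (\<Sum>k\<in>K. (f k)\<^sup>2 * (\<Phi> k x)\<^sup>2)"
proof -
  obtain m where m: "t (m-1) < x" "x < t (m+1)" using mesh_open_cell by blast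
  have "partial_synthesis f K x = (\<Sum>k\<in>K \<inter> window m. f k * \<Phi> k x)"
    unfolding partial_synthesis_def
    by (rule sum.mono_neutral_right) (use assms Phi_nonzero_imp_window[OF m] in auto)
  then have "(partial_synthesis f K x)\<^sup>2 \<le> (\<Sum>k\<in>K \<inter> window m. (f k * \<Phi> k x)\<^sup>2) * card (K \<inter> window m)"
    using sum_squared_le_sum_of_squares by simp
  also have "\<dots> \<le> (\<Sum>k\<in>K. (f k * \<Phi> k x)\<^sup>2) * (4 * real n - 1)"
  proof (rule mult_mono)
    show "(\<Sum>k\<in>K \<inter> window m. (f k * \<Phi> k x)\<^sup>2) \<le> (\<Sum>k\<in>K. (f k * \<Phi> k x)\<^sup>2)"
      by (rule sum_mono2) (use assms in auto)
    have "card (K \<inter> window m) \<le> card (window m)" by (rule card_mono[OF finite_window]) auto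
    then show "real (card (K \<inter> window m)) \<le> 4 * real n - 1" using card_window[of m] by linarith
  qed (auto intro: sum_nonneg)
  finally show ?thesis by (simp add: power_mult_distrib mult_ac)
qed

lemma integral_partial_synthesis_sq_le:
  assumes sf: "(\<lambda>k. (f k)\<^sup>2) summable_on UNIV"
  shows "integral UNIV (\<lambda>x. (partial_synthesis f (centered N) x)\<^sup>2)
           \<le> (4 * real n - 1) * Phi_L2_bound * (\<Sum>\<^sub>\<infinity>k. (f k)\<^sup>2)"
proof -
  let ?q = "4 * real n - 1"
  have int: "(\<lambda>x. (f k)\<^sup>2 * (\<Phi> k x)\<^sup>2) integrable_on UNIV" for k
    by (intro integrable_on_mult_right Phi_sq_integrable)
  have "(\<lambda>x. ?q * (\<Sum>k\<in>centered N. (f k)\<^sup>2 * (\<Phi> k x)\<^sup>2)) integrable_on UNIV"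
    by (intro integrable_on_mult_right integrable_sum int) simp
  then have "integral UNIV (\<lambda>x. (partial_synthesis f (centered N) x)\<^sup>2)
               \<le> integral UNIV (\<lambda>x. ?q * (\<Sum>k\<in>centered N. (f k)\<^sup>2 * (\<Phi> k x)\<^sup>2))"
    by (intro integral_le partial_synthesis_sq_integrable partial_synthesis_sq_le) auto
  also have "\<dots> = ?q * (\<Sum>k\<in>centered N. (f k)\<^sup>2 * integral UNIV (\<lambda>x. (\<Phi> k x)\<^sup>2))"
    by (simp add: integral_mult_right integral_sum int Phi_sq_integrable)
  also have "\<dots> \<le> ?q * (\<Sum>k\<in>centered N. (f k)\<^sup>2 * Phi_L2_bound)"
    using n1 by (intro mult_left_mono sum_mono Phi_sq_integral_le) auto
  also have "\<dots> = ?q * Phi_L2_bound * (\<Sum>k\<in>centered N. (f k)\<^sup>2)"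
    by (simp add: sum_distrib_left sum_distrib_right mult_ac)
  also have "\<dots> \<le> ?q * Phi_L2_bound * (\<Sum>\<^sub>\<infinity>k. (f k)\<^sup>2)"
    using n1 Phi_L2_bound_nonneg by (intro mult_left_mono finite_sum_le_infsum[OF sf]) auto
  finally show ?thesis .
qed

lemma riesz_upper_bound:
  assumes sf: "(\<lambda>k. (f k)\<^sup>2) summable_on UNIV"
  shows "(\<lambda>x. (synthesis f x)\<^sup>2) integrable_on UNIV \<and>
         integral UNIV (\<lambda>x. (synthesis f x)\<^sup>2) \<le> (4 * real n - 1) * Phi_L2_bound * (\<Sum>\<^sub>\<infinity>k. (f k)\<^sup>2)"
proof (rule integrable_le_if_bounded_on_exhaustion)
  show "incseq mesh_box" by (rule monoI) (auto simp: mesh_le_iff intro: order_trans)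
  show "(\<Union>N. mesh_box N) = UNIV" using in_mesh_box by blast
  fix N
  let ?p = "\<lambda>x. (partial_synthesis f (centered (N + 2*n)) x)\<^sup>2"
  have eq: "?p x = (synthesis f x)\<^sup>2" if "x \<in> mesh_box N" for x
    using synthesis_on_mesh_box[OF that] by simp
  have p_int: "?p integrable_on mesh_box N"
    by (intro integrable_continuous_interval continuous_intros
        continuous_on_subset[OF partial_synthesis_continuous]) auto
  then show "(\<lambda>x. (synthesis f x)\<^sup>2) integrable_on mesh_box N" using eq by (rule integrable_eq)
  have "integral (mesh_box N) (\<lambda>x. (synthesis f x)\<^sup>2) = integral (mesh_box N) ?p"
    using eq by (intro integral_cong) auto
  also have "\<dots> \<le> integral UNIV ?p"
    by (rule integral_subset_le[OF _ p_int partial_synthesis_sq_integrable]) auto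
  also have "\<dots> \<le> (4 * real n - 1) * Phi_L2_bound * (\<Sum>\<^sub>\<infinity>k. (f k)\<^sup>2)"
    by (rule integral_partial_synthesis_sq_le[OF sf])
  finally show "integral (mesh_box N) (\<lambda>x. (synthesis f x)\<^sup>2) \<le> \<dots>" .
qed simp

lemma sum_window_sq_le:
  assumes sf: "(\<lambda>k. (f k)\<^sup>2) summable_on UNIV" and F: "finite F"
  shows "(\<Sum>m\<in>F. \<Sum>k\<in>window m. (f k)\<^sup>2) \<le> (4 * real n - 1) * (\<Sum>\<^sub>\<infinity>k. (f k)\<^sup>2)"
proof -
  define D where "D = {- 2*int n + 1 .. 2*int n - 1}"
  have "(\<Sum>m\<in>F. \<Sum>k\<in>window m. (f k)\<^sup>2) = (\<Sum>m\<in>F. \<Sum>d\<in>D. (f (d + m))\<^sup>2)"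
  proof (rule sum.cong[OF refl])
    fix m
    show "(\<Sum>k\<in>window m. (f k)\<^sup>2) = (\<Sum>d\<in>D. (f (d + m))\<^sup>2)"
      unfolding window_def D_def by (subst sum_int_interval_shift[where c = m]) simp
  qed
  also have "\<dots> = (\<Sum>d\<in>D. \<Sum>m\<in>F. (f (d + m))\<^sup>2)" by (rule sum.swap)
  also have "\<dots> \<le> (\<Sum>d\<in>D. (\<Sum>\<^sub>\<infinity>k. (f k)\<^sup>2))"
  proof (rule sum_mono)
    fix d
    have "(\<Sum>m\<in>F. (f (d + m))\<^sup>2) = (\<Sum>k\<in>(\<lambda>m. d + m) ` F. (f k)\<^sup>2)"
      by (subst sum.reindex) (auto simp: inj_on_def)
    also have "\<dots> \<le> (\<Sum>\<^sub>\<infinity>k. (f k)\<^sup>2)" by (rule finite_sum_le_infsum[OF sf]) (use F in auto)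
    finally show "(\<Sum>m\<in>F. (f (d + m))\<^sup>2) \<le> (\<Sum>\<^sub>\<infinity>k. (f k)\<^sup>2)" .
  qed
  also have "\<dots> = (4 * real n - 1) * (\<Sum>\<^sub>\<infinity>k. (f k)\<^sup>2)"
    using n1 by (simp add: D_def)
  finally show ?thesis .
qed

text \<open>Near the node \<open>t m\<close> the synthesis is close to \<open>f m / sqrt (phi_int m)\<close>, because
  \<open>\<Phi> k (t m) = \<delta>\<^sub>k\<^sub>m / sqrt (phi_int k)\<close> and the \<open>\<Phi> k\<close> are uniformly equicontinuous.\<close>

lemma partial_synthesis_near_node_ge:
  assumes eps: "\<And>k x y. \<bar>x - y\<bar> < d \<Longrightarrow> \<bar>\<Phi> k x - \<Phi> k y\<bar> < e"
    and x: "\<bar>x - t m\<bar> < d" and Imax: "\<And>k. phi_int k \<le> Imax"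
  shows "(partial_synthesis f (window m) x)\<^sup>2
           \<ge> (f m)\<^sup>2 / (2 * Imax) - e\<^sup>2 * (4 * real n - 1) * (\<Sum>k\<in>window m. (f k)\<^sup>2)"
proof -
  define a where "a = f m / sqrt (phi_int m)"
  define b where "b = (\<Sum>k\<in>window m. f k * (\<Phi> k x - \<Phi> k (t m)))"
  have "m \<in> window m" unfolding window_def using n1 by auto
  have "(\<Sum>k\<in>window m. f k * \<Phi> k (t m)) = (\<Sum>k\<in>window m. if k = m then a else 0)"
    unfolding a_def by (rule sum.cong) (auto simp: Phi_node unit_seq_def)
  also have "\<dots> = a" using \<open>m \<in> window m\<close> finite_window by simp
  finally have "(\<Sum>k\<in>window m. f k * \<Phi> k (t m)) = a" .
  then have ab: "partial_synthesis f (window m) x = a + b"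
    unfolding partial_synthesis_def b_def by (simp add: right_diff_distrib sum_subtractf)
  have "\<bar>b\<bar> \<le> (\<Sum>k\<in>window m. \<bar>f k\<bar> * e)"
    unfolding b_def using eps[OF x]
    by (intro order_trans[OF sum_abs] sum_mono) (simp add: abs_mult mult_left_mono less_imp_le)
  also have "\<dots> = e * (\<Sum>k\<in>window m. \<bar>f k\<bar>)" by (simp add: sum_distrib_left mult_ac)
  finally have "b\<^sup>2 \<le> (e * (\<Sum>k\<in>window m. \<bar>f k\<bar>))\<^sup>2"
    using power_mono[of "\<bar>b\<bar>" _ 2] by simp
  also have "\<dots> \<le> e\<^sup>2 * ((\<Sum>k\<in>window m. \<bar>f k\<bar>\<^sup>2) * card (window m))"
    unfolding power_mult_distrib by (rule mult_left_mono[OF sum_squared_le_sum_of_squares]) simp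
  finally have b2: "b\<^sup>2 \<le> e\<^sup>2 * (4 * real n - 1) * (\<Sum>k\<in>window m. (f k)\<^sup>2)"
    by (simp add: card_window mult_ac)
  have "(f m)\<^sup>2 / (2 * Imax) \<le> a\<^sup>2 / 2"
    using phi_int_pos[of m] Imax[of m] unfolding a_def
    by (simp add: power_divide divide_left_mono mult_pos_pos)
  then show ?thesis unfolding ab using sq_add_ge[of a b] b2 by linarith
qed

lemma integral_near_node_ge:
  fixes m :: int
  assumes eps: "\<And>k x y. \<bar>x - y\<bar> < d \<Longrightarrow> \<bar>\<Phi> k x - \<Phi> k y\<bar> < e"
    and dl: "0 < dl" "dl < d" "dl < min_step" and Imax: "\<And>k. phi_int k \<le> Imax"
  defines "B \<equiv> {t m - dl .. t m + dl}"
  shows "(\<lambda>x. (synthesis f x)\<^sup>2) integrable_on B \<and>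
    integral B (\<lambda>x. (synthesis f x)\<^sup>2)
      \<ge> 2 * dl * ((f m)\<^sup>2 / (2 * Imax) - e\<^sup>2 * (4 * real n - 1) * (\<Sum>k\<in>window m. (f k)\<^sup>2))"
proof -
  define c where "c = (f m)\<^sup>2 / (2 * Imax) - e\<^sup>2 * (4 * real n - 1) * (\<Sum>k\<in>window m. (f k)\<^sup>2)"
  have xB: "\<bar>x - t m\<bar> < d" "\<bar>x - t m\<bar> < min_step" if "x \<in> B" for x
    using that dl unfolding B_def by auto
  have eq: "synthesis f x = partial_synthesis f (window m) x" if "x \<in> B" for x
    using near_node_in_cell[OF xB(2)[OF that]] finite_window
    by (intro synthesis_eq_partial_synthesis) auto
  have "(\<lambda>x. (partial_synthesis f (window m) x)\<^sup>2) integrable_on B"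
    unfolding B_def by (intro integrable_continuous_interval continuous_intros
        continuous_on_subset[OF partial_synthesis_continuous]) auto
  then have int: "(\<lambda>x. (synthesis f x)\<^sup>2) integrable_on B" by (rule integrable_eq) (simp add: eq)
  have "integral B (\<lambda>x. c) \<le> integral B (\<lambda>x. (synthesis f x)\<^sup>2)"
  proof (rule integral_le[OF _ int])
    show "(\<lambda>x. c) integrable_on B" unfolding B_def by (intro integrable_continuous_interval continuous_intros)
    show "c \<le> (synthesis f x)\<^sup>2" if "x \<in> B" for x
      unfolding eq[OF that] c_def by (rule partial_synthesis_near_node_ge[OF eps xB(1)[OF that] Imax])
  qed
  moreover have "integral B (\<lambda>x. c) = 2 * dl * c" unfolding B_def using dl by simp
  ultimately show ?thesis using int unfolding c_def by simp
qed

lemma node_intervals_disjoint: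
  assumes "dl \<le> min_step / 4" "x \<in> {t m1 - dl .. t m1 + dl}" "x \<in> {t m2 - dl .. t m2 + dl}"
  shows "m1 = m2"
proof (rule ccontr)
  assume "m1 \<noteq> m2"
  then have "\<bar>t m1 - t m2\<bar> \<ge> min_step"
    using mesh_gap[of m1 m2] mesh_gap[of m2 m1] by (cases "m1 < m2") auto
  then show False using assms min_step_pos by auto
qed

lemma sum_integral_node_intervals_le:
  assumes dl: "dl \<le> min_step / 4" and F: "finite F"
    and int: "(\<lambda>x. (synthesis f x)\<^sup>2) integrable_on UNIV"
    and int_B: "\<And>m. (\<lambda>x. (synthesis f x)\<^sup>2) integrable_on {t m - dl .. t m + dl}"
  shows "(\<Sum>m\<in>F. integral {t m - dl .. t m + dl} (\<lambda>x. (synthesis f x)\<^sup>2))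
           \<le> integral UNIV (\<lambda>x. (synthesis f x)\<^sup>2)"
proof -
  let ?g = "\<lambda>m x. if x \<in> {t m - dl .. t m + dl} then (synthesis f x)\<^sup>2 else 0"
  have int_g: "?g m integrable_on UNIV" for m
    using int_B[of m] by (simp only: integrable_restrict_UNIV)
  have "(\<Sum>m\<in>F. integral {t m - dl .. t m + dl} (\<lambda>x. (synthesis f x)\<^sup>2))
          = (\<Sum>m\<in>F. integral UNIV (?g m))"
    by (simp only: integral_restrict_UNIV)
  also have "\<dots> = integral UNIV (\<lambda>x. \<Sum>m\<in>F. ?g m x)"
    by (rule integral_sum[OF F int_g, symmetric])
  also have "\<dots> \<le> integral UNIV (\<lambda>x. (synthesis f x)\<^sup>2)"
  proof (rule integral_le[OF integrable_sum[OF F int_g] int])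
    fix x
    define F' where "F' = {m\<in>F. x \<in> {t m - dl .. t m + dl}}"
    have "\<forall>m1\<in>F'. \<forall>m2\<in>F'. m1 = m2"
      using node_intervals_disjoint[OF dl] unfolding F'_def by blast
    then have "card F' \<le> 1" using card_le_Suc0_iff_eq[of F'] F unfolding F'_def by simp
    have "(\<Sum>m\<in>F. ?g m x) = (\<Sum>m\<in>F'. (synthesis f x)\<^sup>2)"
      unfolding F'_def by (rule sum.inter_filter[OF F, symmetric])
    also have "\<dots> = card F' * (synthesis f x)\<^sup>2" by simp
    also have "\<dots> \<le> 1 * (synthesis f x)\<^sup>2"
      using \<open>card F' \<le> 1\<close> by (intro mult_right_mono) auto
    finally have "(\<Sum>m\<in>F. ?g m x) \<le> 1 * (synthesis f x)\<^sup>2" .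
    then show "(\<Sum>m\<in>F. ?g m x) \<le> (synthesis f x)\<^sup>2" by simp
  qed
  finally show ?thesis .
qed

lemma sum_sq_le_synthesis_sq_integral:
  assumes eps: "\<And>k x y. \<bar>x - y\<bar> < d \<Longrightarrow> \<bar>\<Phi> k x - \<Phi> k y\<bar> < e"
    and dl: "0 < dl" "dl < d" "dl \<le> min_step / 4" and Imax: "\<And>k. phi_int k \<le> Imax"
    and sf: "(\<lambda>k. (f k)\<^sup>2) summable_on UNIV" and F: "finite F"
  shows "dl / Imax * (\<Sum>m\<in>F. (f m)\<^sup>2)
           \<le> integral UNIV (\<lambda>x. (synthesis f x)\<^sup>2) + 2 * dl * e\<^sup>2 * (4 * real n - 1)\<^sup>2 * (\<Sum>\<^sub>\<infinity>k. (f k)\<^sup>2)"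
proof -
  let ?q = "4 * real n - 1"
  have "dl < min_step" using dl(3) min_step_pos by linarith
  note near = integral_near_node_ge[OF eps dl(1,2) this Imax]
  have "(\<Sum>m\<in>F. 2 * dl * ((f m)\<^sup>2 / (2 * Imax) - e\<^sup>2 * ?q * (\<Sum>k\<in>window m. (f k)\<^sup>2)))
          \<le> (\<Sum>m\<in>F. integral {t m - dl .. t m + dl} (\<lambda>x. (synthesis f x)\<^sup>2))"
    using near by (intro sum_mono) blast
  also have "\<dots> \<le> integral UNIV (\<lambda>x. (synthesis f x)\<^sup>2)"
    using near riesz_upper_bound[OF sf] by (intro sum_integral_node_intervals_le[OF dl(3) F]) auto
  finally have "dl / Imax * (\<Sum>m\<in>F. (f m)\<^sup>2) - 2 * dl * e\<^sup>2 * ?q * (\<Sum>m\<in>F. \<Sum>k\<in>window m. (f k)\<^sup>2)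
                  \<le> integral UNIV (\<lambda>x. (synthesis f x)\<^sup>2)"
    by (simp add: sum_subtractf sum_distrib_left right_diff_distrib sum_divide_distrib mult_ac)
  moreover have "2 * dl * e\<^sup>2 * ?q * (\<Sum>m\<in>F. \<Sum>k\<in>window m. (f k)\<^sup>2)
                   \<le> 2 * dl * e\<^sup>2 * ?q * (?q * (\<Sum>\<^sub>\<infinity>k. (f k)\<^sup>2))"
    using dl n1 by (intro mult_left_mono sum_window_sq_le[OF sf F]) auto
  ultimately show ?thesis by (simp add: power2_eq_square mult_ac)
qed

lemma riesz_lower_bound:
  "\<exists>A>0. \<forall>f. (\<lambda>k. (f k)\<^sup>2) summable_on UNIV \<longrightarrow>
     A * (\<Sum>\<^sub>\<infinity>k. (f k)\<^sup>2) \<le> integral UNIV (\<lambda>x. (synthesis f x)\<^sup>2)"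
proof -
  obtain Imin Imax where I: "0 < Imin" "\<And>k. Imin \<le> phi_int k \<and> phi_int k \<le> Imax"
    using phi_int_bounds by blast
  then have Imax: "\<And>k. phi_int k \<le> Imax" and Imax_pos: "Imax > 0"
    using order_less_le_trans[OF I(1)] by (blast, fastforce)
  define q where "q = 4 * real n - 1"
  have q: "q > 0" unfolding q_def using n1 by simp
  \<comment> \<open>chosen so that the error term is half of the main term\<close>
  define e where "e = 1 / (2 * q * sqrt Imax)"
  have e: "e > 0" unfolding e_def using q Imax_pos by simp
  obtain d where d: "d > 0" "\<And>k x y. \<bar>x - y\<bar> < d \<Longrightarrow> \<bar>\<Phi> k x - \<Phi> k y\<bar> < e"
    using Phi_uniformly_equicontinuous[OF e] by blast
  define dl where "dl = min (d/2) (min_step/4)"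
  have dl: "0 < dl" "dl < d" "dl \<le> min_step / 4" unfolding dl_def using d(1) min_step_pos by auto
  have err: "2 * dl * e\<^sup>2 * q\<^sup>2 = dl / Imax / 2"
    unfolding e_def using q Imax_pos by (simp add: power_divide power_mult_distrib field_simps)
  have "dl / Imax / 2 * (\<Sum>\<^sub>\<infinity>k. (f k)\<^sup>2) \<le> integral UNIV (\<lambda>x. (synthesis f x)\<^sup>2)"
    if sf: "(\<lambda>k. (f k)\<^sup>2) summable_on UNIV" for f
  proof -
    let ?S = "\<Sum>\<^sub>\<infinity>k. (f k)\<^sup>2" and ?Z = "integral UNIV (\<lambda>x. (synthesis f x)\<^sup>2)"
    have "?S \<le> Imax / dl * ?Z + ?S / 2"
    proof (rule infsum_le_finite_sums[OF sf])
      fix F :: "int set" assume "finite F"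
      have "dl / Imax * (\<Sum>m\<in>F. (f m)\<^sup>2) \<le> ?Z + dl / Imax / 2 * ?S"
        using sum_sq_le_synthesis_sq_integral[OF d(2) dl Imax sf \<open>finite F\<close>]
        unfolding q_def[symmetric] err .
      then show "(\<Sum>m\<in>F. (f m)\<^sup>2) \<le> Imax / dl * ?Z + ?S / 2"
        using dl(1) Imax_pos by (simp add: field_simps)
    qed
    then show ?thesis using dl(1) Imax_pos by (simp add: field_simps)
  qed
  moreover have "dl / Imax / 2 > 0" using dl(1) Imax_pos by simp
  ultimately show ?thesis by blast
qed

lemma riesz_bounds:
  "\<exists>A B. 0 < A \<and> A \<le> B \<and>
     (\<forall>f :: int \<Rightarrow> real. (\<lambda>k. (f k)\<^sup>2) summable_on UNIV \<longrightarrow>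
        (\<lambda>x. (synthesis f x)\<^sup>2) integrable_on UNIV \<and>
        A * (\<Sum>\<^sub>\<infinity>k. (f k)\<^sup>2) \<le> integral UNIV (\<lambda>x. (synthesis f x)\<^sup>2) \<and>
        integral UNIV (\<lambda>x. (synthesis f x)\<^sup>2) \<le> B * (\<Sum>\<^sub>\<infinity>k. (f k)\<^sup>2))"
proof -
  obtain A where A: "A > 0" "\<And>f. (\<lambda>k. (f k)\<^sup>2) summable_on UNIV \<Longrightarrow>
      A * (\<Sum>\<^sub>\<infinity>k. (f k)\<^sup>2) \<le> integral UNIV (\<lambda>x. (synthesis f x)\<^sup>2)"
    using riesz_lower_bound by blast
  define B where "B = max A ((4 * real n - 1) * Phi_L2_bound)"
  have "integral UNIV (\<lambda>x. (synthesis f x)\<^sup>2) \<le> B * (\<Sum>\<^sub>\<infinity>k. (f k)\<^sup>2)"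
    if "(\<lambda>k. (f k)\<^sup>2) summable_on UNIV" for f
    using riesz_upper_bound[OF that] infsum_nonneg[of UNIV "\<lambda>k. (f k)\<^sup>2"]
    unfolding B_def by (smt (verit) max.cobounded2 mult_right_mono zero_le_power2)
  moreover have "A \<le> B" unfolding B_def by simp
  ultimately show ?thesis using A riesz_upper_bound by blast
qed

section \<open>Supports\<close>

definition support_bound where "support_bound = real_of_int (4 * int n - 2) * (hl + hr)"

lemma emeasure_fsupp_dilated_Phi_le:
  "emeasure lborel (fsupp (\<lambda>x. \<Phi> k (2 ^ j * x))) \<le> ennreal (support_bound / 2 ^ j)"
proof -
  let ?a = "t (k - 2*int n + 1) / 2 ^ j" and ?b = "t (k + 2*int n - 1) / 2 ^ j"
  have "x \<in> {?a..?b}" if "\<Phi> k (2 ^ j * x) \<noteq> 0" for x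
    using Phi_nonzero_between[OF that] by (simp add: field_simps)
  moreover have "?a \<le> ?b" using n1 by (simp add: scaled_mesh_le_iff)
  ultimately have "emeasure lborel (fsupp (\<lambda>x. \<Phi> k (2 ^ j * x))) \<le> ennreal (?b - ?a)"
    by (rule emeasure_fsupp_le)
  also have "?b - ?a \<le> support_bound / 2 ^ j"
    using mesh_diff_le[of "k - 2*int n + 1" "k + 2*int n - 1"] n1
    by (simp add: support_bound_def diff_divide_distrib[symmetric] divide_right_mono algebra_simps)
  finally show ?thesis by (simp add: ennreal_leI order_trans)
qed

lemma Phi_support_measure_bounded: "(SUP k. emeasure lborel (fsupp (\<Phi> k))) < \<infinity>"
proof -
  have "(SUP k. emeasure lborel (fsupp (\<Phi> k))) \<le> ennreal support_bound"
    using emeasure_fsupp_dilated_Phi_le[where j = 0] by (simp add: SUP_least)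
  also have "\<dots> < \<infinity>" by simp
  finally show ?thesis .
qed

lemma Phi_dilated_support_measure_tendsto_0:
  "(\<lambda>j::nat. SUP k. emeasure lborel (fsupp (\<lambda>x. \<Phi> k (2 ^ j * x)))) \<longlonglongrightarrow> 0"
proof (rule tendsto_sandwich[of "\<lambda>_. 0" _ _ "\<lambda>j. ennreal (support_bound / 2 ^ j)"])
  show "\<forall>\<^sub>F j in sequentially. (SUP k. emeasure lborel (fsupp (\<lambda>x. \<Phi> k (2 ^ j * x))))
          \<le> ennreal (support_bound / 2 ^ j)"
    by (intro always_eventually allI SUP_least emeasure_fsupp_dilated_Phi_le)
  have "(\<lambda>j. support_bound / 2 ^ j) \<longlonglongrightarrow> 0" by (rule LIMSEQ_divide_realpow_zero) simp
  then show "(\<lambda>j. ennreal (support_bound / 2 ^ j)) \<longlonglongrightarrow> 0"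
    using tendsto_ennrealI by fastforce
qed auto

lemma Phi_supports_finite_overlap:
  "\<exists>s::nat. \<forall>I :: int set. (infinite I \<or> s < card I) \<longrightarrow> (\<Inter>k\<in>I. fsupp (\<Phi> k)) = {}"
proof (intro exI[of _ "4 * n - 1"] allI impI)
  fix I :: "int set"
  assume I: "infinite I \<or> 4 * n - 1 < card I"
  show "(\<Inter>k\<in>I. fsupp (\<Phi> k)) = {}"
  proof (rule ccontr)
    assume "(\<Inter>k\<in>I. fsupp (\<Phi> k)) \<noteq> {}"
    then obtain x where x: "\<And>k. k \<in> I \<Longrightarrow> x \<in> fsupp (\<Phi> k)" by blast
    obtain m where m: "t m \<le> x" "x < t (m+1)" using mesh_cell by blast
    have "I \<subseteq> window m"
    proof
      fix k assume k: "k \<in> I"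
      have "fsupp (\<Phi> k) \<subseteq> {t (k - 2*int n + 1) .. t (k + 2*int n - 1)}"
        by (rule fsupp_subset_Icc) (use Phi_nonzero_between in fastforce)
      then have "t (k - 2*int n + 1) < t (m+1)" "t m \<le> t (k + 2*int n - 1)"
        using x[OF k] m by auto
      then show "k \<in> window m" unfolding window_def mesh_less_iff mesh_le_iff by auto
    qed
    then have "finite I" "card I \<le> card (window m)"
      using finite_window finite_subset card_mono by blast+
    moreover have "card (window m) = 4 * n - 1" using card_window[of m] n1 by linarith
    ultimately show False using I by simp
  qed
qed

end


theorem lemma1:
  fixes n :: nat and hl hr :: real and \<phi> :: "int \<Rightarrow> real \<Rightarrow> real"
  assumes n: "n \<ge> 1" and hl: "hl > 0" and hr: "hr > 0"
    and limit: "\<And>k. continuous_on UNIV (\<phi> k) \<and>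
                 uniform_limit UNIV (\<lambda>j. DD_level hl hr n j (unit_seq k)) (\<phi> k) sequentially"
    and pos_int: "\<And>k. integral UNIV (\<phi> k) > 0"
  defines "\<Phi> \<equiv> scaling_fun \<phi>"
  shows
    "(\<exists>A B. 0 < A \<and> A \<le> B \<and>
        (\<forall>f :: int \<Rightarrow> real. (\<lambda>k. (f k)\<^sup>2) summable_on UNIV \<longrightarrow>
           (\<lambda>x. (\<Sum>\<^sub>\<infinity>k. f k * \<Phi> k x)\<^sup>2) integrable_on UNIV \<and>
           A * (\<Sum>\<^sub>\<infinity>k. (f k)\<^sup>2) \<le> integral UNIV (\<lambda>x. (\<Sum>\<^sub>\<infinity>k. f k * \<Phi> k x)\<^sup>2) \<and>
           integral UNIV (\<lambda>x. (\<Sum>\<^sub>\<infinity>k. f k * \<Phi> k x)\<^sup>2) \<le> B * (\<Sum>\<^sub>\<infinity>k. (f k)\<^sup>2)))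
   \<and> (\<exists>M. \<forall>k x. \<bar>\<Phi> k x\<bar> \<le> M)
   \<and> (SUP k. emeasure lborel (fsupp (\<Phi> k))) < \<infinity>
   \<and> (\<exists>s::nat. \<forall>I :: int set. (infinite I \<or> s < card I) \<longrightarrow> (\<Inter>k\<in>I. fsupp (\<Phi> k)) = {})
   \<and> ((\<lambda>j::nat. SUP k. emeasure lborel (fsupp (\<lambda>x. \<Phi> k (2 ^ j * x)))) \<longlonglongrightarrow> 0)"
proof -
  interpret DD_scaling_functions hl hr n \<phi>
    by unfold_locales (use n hl hr limit pos_int in auto)
  show ?thesis
    unfolding \<Phi>_def
    using riesz_bounds[unfolded synthesis_def] Phi_bounded Phi_support_measure_bounded
      Phi_supports_finite_overlap Phi_dilated_support_measure_tendsto_0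
    by blast
qed

end
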